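(* Let $\mathcal{C}$ be a $\mathbb{Z}_3\mathbb{Z}_9$-additive code of type $(\alpha,\beta;\gamma,\delta;\kappa)$ and let $C=\Phi(\mathcal{C})$, a code of length $n=\alpha+3\beta$ over $\mathbb{Z}_3$. Then: (i) If $\mathbf{u}_1,\ldots,\mathbf{u}_\gamma$ (of order $3$) and $\mathbf{v}_1,\ldots,\mathbf{v}_\delta$ (of order $9$) are the rows of a generator matrix of $\mathcal{C}$, then $\langle C\rangle$ is generated by $\{\Phi(\mathbf{u}_i)\}_{i=1}^\gamma$, $\{\Phi(\mathbf{v}_j)\}_{j=1}^\delta$, $\{\Phi(3\mathbf{v}_k*\mathbf{v}_l)\}_{1\le l\le k\le\delta}$ and $\{\Phi(3\mathbf{v}_x*\mathbf{v}_y*\mathbf{v}_z)\}_{1\le x\le y\le z\le\delta}$. (ii) $\mathrm{rank}(C)\in\left\{\gamma+2\delta,\ldots,\min\left(\beta+\delta+\kappa,\ \gamma+\delta+\binom{\delta+1}{2}+\binom{\delta+2}{3}\right)\right\}$; equivalently, writing $\mathrm{rank}(C)=\gamma+2\delta+\bar r$, we have $\bar r\in\left\{0,1,\ldots,\min\left(\beta-(\gamma-\kappa)-\delta,\ \binom{\delta+1}{2}+\binom{\delta+2}{3}-\delta\right)\right\}$. (iii) The linear code $\langle C\rangle$ over $\mathbb{Z}_3$ is $\mathbb{Z}_3\mathbb{Z}_9$-linear, i.e. $\langle C\rangle=\Phi(\mathcal{D})$ for some $\mathbb{Z}_3\mathbb{Z}_9$-additive code $\mathcal{D}\subseteq\m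athbb{Z}_3^\alpha\times\mathbb{Z}_9^\beta$.
   Context: A $\mathbb{Z}_3\mathbb{Z}_9$-additive code $\mathcal{C}$ is a subgroup of $\mathbb{Z}_3^\alpha\times\mathbb{Z}_9^\beta$ ($\alpha+\beta>0$). As an abelian group $\mathcal{C}\cong\mathbb{Z}_3^\gamma\times\mathbb{Z}_9^\delta$. Let $\mathcal{C}_3$ be the subcode of codewords of order dividing $3$, and $\kappa$ the dimension over $\mathbb{Z}_3$ of the projection of $\mathcal{C}_3$ onto the first $\alpha$ coordinates; then $\mathcal{C}$ is said to be of type $(\alpha,\beta;\gamma,\delta;\kappa)$. A generator matrix of $\mathcal{C}$ has rows $\mathbf{u}_1,\ldots,\mathbf{u}_\gamma$ of order $3$ and $\mathbf{v}_1,\ldots,\mathbf{v}_\delta$ of order $9$ such that every codeword is uniquely $\sum\lambda_i\mathbf{u}_i+\sum\nu_j\mathbf{v}_j$ with $\lambda_i\in\mathbb{Z}_3$, $\nu_j\in\mathbb{Z}_9$. The Gray map $\phi:\mathbb{Z}_9\to\mathbb{Z}_3^3$ is $\phi(\theta)=\theta''(1,1,1)+\theta'(0,1,2)$ where $\theta=3\theta''+\theta'$, $\theta',\theta''\in\{0,1,2\}$, and $\Phi(\mathbf{x},\mathbf{y})=(\mathbf{x},\phi(y_1),\ldots,\phi(y_\beta))$; $C=\Phi(\mathcal{C})$ is a $\mathbb{Z}_3\mathbb{Z}_9$-linear code. $*$ denotes the componentwise product (in $\mathbb{Z}_3$ on the first $\alpha$ coordinates and in $\mathbb{Z}_9$ on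 the last $\beta$), and $3\mathbf{w}$ multiplies every coordinate by $3$ (so the first $\alpha$ coordinates become $0$). $\langle C\rangle$ is the $\mathbb{Z}_3$-linear span of $C$ and $\mathrm{rank}(C)=\dim_{\mathbb{Z}_3}\langle C\rangle$. *)

theory Defs imports Main begin

text \<open>Codewords of Z3^alpha x Z9^beta are pairs of integer lists (x, y) with
  length x = alpha, entries of x in {0,1,2}, length y = beta, entries of y in {0..8}.\<close>

definition space :: "nat \<Rightarrow> nat \<Rightarrow> (int list \<times> int list) set" where
  "space \<alpha> \<beta> = {(x, y). length x = \<alpha> \<and> set x \<subseteq> {0..2} \<and> length y = \<beta> \<and> set y \<subseteq> {0..8}}"

definition zero_cw :: "nat \<Rightarrow> nat \<Rightarrow> int list \<times> int list" where
  "zero_cw \<alpha> \<beta> = (replicate \<alpha> 0, replicate \<beta> 0)"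

definition cw_add :: "int list \<times> int list \<Rightarrow> int list \<times> int list \<Rightarrow> int list \<times> int list" where
  "cw_add a b = (map2 (\<lambda>s t. (s + t) mod 3) (fst a) (fst b),
                 map2 (\<lambda>s t. (s + t) mod 9) (snd a) (snd b))"

definition cw_smul :: "int \<Rightarrow> int list \<times> int list \<Rightarrow> int list \<times> int list" where
  "cw_smul k a = (map (\<lambda>s. (k * s) mod 3) (fst a), map (\<lambda>s. (k * s) mod 9) (snd a))"

definition cw_mult :: "int list \<times> int list \<Rightarrow> int list \<times> int list \<Rightarrow> int list \<times> int list" where
  "cw_mult a b = (map2 (\<lambda>s t. (s * t) mod 3) (fst a) (fst b),
                  map2 (\<lambda>s t. (s * t) mod 9) (snd a) (snd b))"

definition additive_code :: "nat \<Rightarrow> nat \<Rightarrow> (int list \<times> int list) set \<Rightarrow> bool" where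
  "additive_code \<alpha> \<beta> C \<longleftrightarrow> \<alpha> + \<beta> > 0 \<and> C \<subseteq> space \<alpha> \<beta> \<and> zero_cw \<alpha> \<beta> \<in> C \<and>
     (\<forall>a\<in>C. \<forall>b\<in>C. cw_add a b \<in> C)"

definition order3 :: "nat \<Rightarrow> nat \<Rightarrow> int list \<times> int list \<Rightarrow> bool" where
  "order3 \<alpha> \<beta> w \<longleftrightarrow> w \<noteq> zero_cw \<alpha> \<beta> \<and> cw_smul 3 w = zero_cw \<alpha> \<beta>"

definition order9 :: "nat \<Rightarrow> nat \<Rightarrow> int list \<times> int list \<Rightarrow> bool" where
  "order9 \<alpha> \<beta> w \<longleftrightarrow> cw_smul 3 w \<noteq> zero_cw \<alpha> \<beta> \<and> cw_smul 9 w = zero_cw \<alpha> \<beta>"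

definition gen_comb :: "nat \<Rightarrow> nat \<Rightarrow> (int list \<times> int list) list \<Rightarrow> (int list \<times> int list) list
    \<Rightarrow> int list \<Rightarrow> int list \<Rightarrow> int list \<times> int list" where
  "gen_comb \<alpha> \<beta> us vs ls ns =
     foldr cw_add (map2 cw_smul ls us @ map2 cw_smul ns vs) (zero_cw \<alpha> \<beta>)"

definition is_gen_matrix :: "nat \<Rightarrow> nat \<Rightarrow> (int list \<times> int list) set
    \<Rightarrow> (int list \<times> int list) list \<Rightarrow> (int list \<times> int list) list \<Rightarrow> bool" where
  "is_gen_matrix \<alpha> \<beta> C us vs \<longleftrightarrow>
     set us \<subseteq> C \<and> set vs \<subseteq> C \<and>
     (\<forall>u\<in>set us. order3 \<alpha> \<beta> u) \<and> (\<forall>v\<in>set vs. order9 \<alpha> \<beta> v) \<and>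
     bij_betw (\<lambda>(ls, ns). gen_comb \<alpha> \<beta> us vs ls ns)
       ({ls. length ls = length us \<and> set ls \<subseteq> {0..2}} \<times>
        {ns. length ns = length vs \<and> set ns \<subseteq> {0..8}}) C"

text \<open>Linear algebra over Z3 on vectors = int lists of length n with entries in {0,1,2}.\<close>
definition add3 :: "int list \<Rightarrow> int list \<Rightarrow> int list" where
  "add3 x y = map2 (\<lambda>s t. (s + t) mod 3) x y"

definition smul3 :: "int \<Rightarrow> int list \<Rightarrow> int list" where
  "smul3 c x = map (\<lambda>s. (c * s) mod 3) x"

definition lincomb3 :: "nat \<Rightarrow> int list \<Rightarrow> int list list \<Rightarrow> int list" where
  "lincomb3 n cs xs = foldr add3 (map2 smul3 cs xs) (replicate n 0)"

definition span3 :: "nat \<Rightarrow> int list set \<Rightarrow> int list set" where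
  "span3 n S = {lincomb3 n cs xs | cs xs. set xs \<subseteq> S \<and> length cs = length xs \<and> set cs \<subseteq> {0..2}}"

definition dim3 :: "nat \<Rightarrow> int list set \<Rightarrow> nat" where
  "dim3 n V = (LEAST k. \<exists>xs. length xs = k \<and> set xs \<subseteq> V \<and> span3 n (set xs) = V)"

text \<open>Gray map phi : Z9 -> Z3^3, theta = 3 theta'' + theta'.\<close>
definition phi :: "int \<Rightarrow> int list" where
  "phi \<theta> = (let t2 = \<theta> div 3; t1 = \<theta> mod 3 in [t2 mod 3, (t2 + t1) mod 3, (t2 + 2 * t1) mod 3])"

definition Phi :: "int list \<times> int list \<Rightarrow> int list" where
  "Phi w = fst w @ concat (map phi (snd w))"

definition rank3 :: "nat \<Rightarrow> nat \<Rightarrow> (int list \<times> int list) set \<Rightarrow> nat" where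
  "rank3 \<alpha> \<beta> C = dim3 (\<alpha> + 3 * \<beta>) (span3 (\<alpha> + 3 * \<beta>) (Phi ` C))"

definition sub3 :: "nat \<Rightarrow> nat \<Rightarrow> (int list \<times> int list) set \<Rightarrow> (int list \<times> int list) set" where
  "sub3 \<alpha> \<beta> C = {c \<in> C. cw_smul 3 c = zero_cw \<alpha> \<beta>}"

text \<open>C is isomorphic to Z3^gamma x Z9^delta, i.e. it has a generator matrix with gamma rows of
  order 3 and delta rows of order 9; kappa as in the paper.\<close>
definition code_type :: "nat \<Rightarrow> nat \<Rightarrow> nat \<Rightarrow> nat \<Rightarrow> nat \<Rightarrow> (int list \<times> int list) set \<Rightarrow> bool" where
  "code_type \<alpha> \<beta> \<gamma> \<delta> \<kappa> C \<longleftrightarrow> additive_code \<alpha> \<beta> C \<and>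
     (\<exists>us vs. is_gen_matrix \<alpha> \<beta> C us vs \<and> length us = \<gamma> \<and> length vs = \<delta>) \<and>
     \<kappa> = dim3 \<alpha> (fst ` sub3 \<alpha> \<beta> C)"

end

theory Submission imports Defs begin

text \<open>
  The Gray map is additive only up to a carry: for \<open>\<theta>, \<eta> \<in> \<int>\<^sub>9\<close> with residues \<open>s, t\<close> mod 3,
  \<open>phi \<theta> + phi \<eta> = phi (\<theta> + \<eta>) + q(s, t) (1, 1, 1)\<close> with \<open>q(s, t) = st + s\<^sup>2t + st\<^sup>2\<close> mod 3, and
  \<open>q(s, t) (1, 1, 1)\<close> is the Gray image of \<open>3 q(s, t)\<close>.  Hence \<open>Phi a + Phi b - Phi (a + b)\<close> is the
  image of \<open>3 (a * b + a * a * b + a * b * b)\<close>, and polarization (replacing \<open>b\<close> by \<open>2b\<close>, \<open>a\<close> by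
  \<open>2a\<close> or \<open>a + b\<close>) puts the images of all \<open>3 v * w\<close> and \<open>3 u * v * w\<close> into \<open>\<langle>C\<rangle>\<close>.  Conversely,
  building a codeword row by row and keeping track of the products that each added row of order 9
  creates shows that the rows and these products of rows span \<open>\<langle>C\<rangle>\<close>.

  The span is \<open>Phi (C + T)\<close>, where \<open>T\<close> collects the words \<open>(0, 3h)\<close> whose images lie in \<open>\<langle>C\<rangle>\<close>:
  \<open>Phi\<close> is additive on \<open>T\<close> and every carry is the image of an element of \<open>T\<close>, so \<open>Phi (C + T)\<close>
  is closed under addition.  As a subspace of \<open>\<int>\<^sub>3\<^sup>n\<close> has \<open>3 ^ dim\<close> elements, the rank bounds are
  counts: \<open>Phi\<close> is injective and \<open>|C| = 3 ^ (\<gamma> + 2\<delta>)\<close>; reducing the \<open>\<int>\<^sub>9\<close>-part of \<open>C + T\<close> mod 3 gives a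
  space spanned by the \<open>\<delta>\<close> rows of order 9, with kernel inside (projection of \<open>C\<^sub>3\<close>) \<open>\<times> (3\<int>\<^sub>9)\<^sup>\<beta>\<close>;
  and the spanning family above has at most \<open>\<gamma> + \<delta> + (\<delta>+1 choose 2) + (\<delta>+2 choose 3)\<close> members.
\<close>

section \<open>Linear algebra over \<open>\<int>\<^sub>3\<close>\<close>

definition vec3 :: "nat \<Rightarrow> int list set" where
  "vec3 n = {x. length x = n \<and> set x \<subseteq> {0..2}}"

lemma vec3_iff: "x \<in> vec3 n \<longleftrightarrow> length x = n \<and> (\<forall>i<n. 0 \<le> x!i \<and> x!i \<le> 2)"
  by (auto simp: vec3_def set_conv_nth subset_iff)

lemma length_vec3: "x \<in> vec3 n \<Longrightarrow> length x = n"
  by (simp add: vec3_iff)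

lemma nth_vec3_mod: "x \<in> vec3 n \<Longrightarrow> i < n \<Longrightarrow> x!i mod 3 = x!i"
  by (auto simp: vec3_iff)

lemma mod3_le2 [simp]: "(a::int) mod 3 \<le> 2"
  using pos_mod_bound[of 3 a] by linarith

lemma finite_vec3: "finite (vec3 n)"
proof -
  have "vec3 n = {xs. set xs \<subseteq> {0..2} \<and> length xs = n}" by (auto simp: vec3_def)
  then show ?thesis by (simp add: finite_lists_length_eq)
qed

lemma length_add3 [simp]: "length (add3 x y) = min (length x) (length y)"
  by (simp add: add3_def)

lemma nth_add3 [simp]: "i < length x \<Longrightarrow> i < length y \<Longrightarrow> add3 x y ! i = (x!i + y!i) mod 3"
  by (simp add: add3_def)

lemma length_smul3 [simp]: "length (smul3 c x) = length x"
  by (simp add: smul3_def)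

lemma nth_smul3 [simp]: "i < length x \<Longrightarrow> smul3 c x ! i = (c * x!i) mod 3"
  by (simp add: smul3_def)

lemma add3_in_vec3: "length x = n \<Longrightarrow> length y = n \<Longrightarrow> add3 x y \<in> vec3 n"
  by (simp add: vec3_iff)

lemma zero_in_vec3: "replicate n 0 \<in> vec3 n"
  by (simp add: vec3_iff)

lemma add3_commute: "add3 x y = add3 y x"
  by (rule nth_equalityI) (auto simp: add.commute)

lemma add3_assoc:
  "length x = n \<Longrightarrow> length y = n \<Longrightarrow> length z = n \<Longrightarrow> add3 (add3 x y) z = add3 x (add3 y z)"
  by (rule nth_equalityI) (auto simp: mod_simps add.assoc)

lemma add3_zero_right: "x \<in> vec3 n \<Longrightarrow> add3 x (replicate n 0) = x"
  by (rule nth_equalityI) (auto simp: length_vec3 nth_vec3_mod)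

lemma add3_zero_left: "x \<in> vec3 n \<Longrightarrow> add3 (replicate n 0) x = x"
  using add3_zero_right add3_commute by metis

lemma smul3_zero: "smul3 0 x = replicate (length x) 0"
  by (rule nth_equalityI) auto

lemma smul3_one: "x \<in> vec3 n \<Longrightarrow> smul3 1 x = x"
  by (rule nth_equalityI) (auto simp: length_vec3 nth_vec3_mod)

lemma smul3_two: "smul3 2 x = add3 x x"
  by (rule nth_equalityI) (auto simp: mod_simps)

lemma smul3_mod: "smul3 c x = smul3 (c mod 3) x"
  by (rule nth_equalityI) (auto simp: mod_simps)

lemma smul3_replicate_zero [simp]: "smul3 c (replicate n 0) = replicate n 0"
  by (rule nth_equalityI) auto

lemma add3_append: "length x1 = length x2 \<Longrightarrow> add3 (x1 @ y1) (x2 @ y2) = add3 x1 x2 @ add3 y1 y2"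
  by (simp add: add3_def)

lemma smul3_append: "smul3 c (x @ y) = smul3 c x @ smul3 c y"
  by (simp add: smul3_def)

lemma concat_map_in_vec3:
  "(\<And>y. y \<in> set ys \<Longrightarrow> f y \<in> vec3 m) \<Longrightarrow> concat (map f ys) \<in> vec3 (m * length ys)"
  by (induction ys) (auto simp: vec3_def)

lemma append_in_vec3: "x \<in> vec3 m \<Longrightarrow> y \<in> vec3 n \<Longrightarrow> x @ y \<in> vec3 (m + n)"
  by (auto simp: vec3_def)

lemma add3_Nil [simp]: "add3 [] [] = []"
  by (simp add: add3_def)

lemma add3_concat:
  "(\<And>i. i \<in> set ks \<Longrightarrow> length (F i) = length (G i)) \<Longrightarrow>
   add3 (concat (map F ks)) (concat (map G ks)) = concat (map (\<lambda>i. add3 (F i) (G i)) ks)"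
  by (induction ks) (auto simp: add3_append)

lemma add3_eq_imp_eq_sub: "length y = n \<Longrightarrow> z \<in> vec3 n \<Longrightarrow> x = add3 y z \<Longrightarrow> z = add3 x (smul3 2 y)"
proof (rule nth_equalityI)
  fix i assume "length y = n" "z \<in> vec3 n" "x = add3 y z" "i < length z"
  moreover have "((a + b) mod 3 + (2 * a) mod 3) mod 3 = b mod 3" for a b :: int
    by presburger
  ultimately show "z ! i = add3 x (smul3 2 y) ! i"
    by (simp add: length_vec3 nth_vec3_mod)
qed (simp add: length_vec3)

text \<open>Closure under scalar multiples is omitted: it follows from closure under addition
  (\<open>subspace3_smul\<close>).\<close>

definition subspace3 :: "nat \<Rightarrow> int list set \<Rightarrow> bool" where
  "subspace3 n Y \<longleftrightarrow> Y \<subseteq> vec3 n \<and> replicate n 0 \<in> Y \<and> (\<forall>x\<in>Y. \<forall>y\<in>Y. add3 x y \<in> Y)"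

lemma subspace3_subset: "subspace3 n Y \<Longrightarrow> Y \<subseteq> vec3 n"
  by (simp add: subspace3_def)

lemma subspace3_zero: "subspace3 n Y \<Longrightarrow> replicate n 0 \<in> Y"
  by (simp add: subspace3_def)

lemma subspace3_add: "subspace3 n Y \<Longrightarrow> x \<in> Y \<Longrightarrow> y \<in> Y \<Longrightarrow> add3 x y \<in> Y"
  by (simp add: subspace3_def)

lemma subspace3_finite: "subspace3 n Y \<Longrightarrow> finite Y"
  using finite_subset[OF subspace3_subset finite_vec3] .

lemma subspace3_smul:
  assumes Y: "subspace3 n Y" and x: "x \<in> Y"
  shows "smul3 c x \<in> Y"
proof -
  have xv: "x \<in> vec3 n" using Y x subspace3_subset by blast
  have "c mod 3 \<in> {0, 1, 2}" by auto
  moreover have "smul3 0 x \<in> Y" using Y smul3_zero[of x] length_vec3[OF xv] subspace3_zero by simp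
  moreover have "smul3 1 x \<in> Y" using smul3_one[OF xv] x by simp
  moreover have "smul3 2 x \<in> Y" using smul3_two[of x] subspace3_add[OF Y x x] by simp
  ultimately show ?thesis using smul3_mod[of c x] by auto
qed

lemma subspace3_vec3: "subspace3 n (vec3 n)"
  by (auto simp: subspace3_def zero_in_vec3 length_vec3 intro: add3_in_vec3)

lemma lincomb3_Nil [simp]: "lincomb3 n [] [] = replicate n 0"
  by (simp add: lincomb3_def)

lemma lincomb3_Cons [simp]: "lincomb3 n (c # cs) (x # xs) = add3 (smul3 c x) (lincomb3 n cs xs)"
  by (simp add: lincomb3_def)

lemma lincomb3_in_subspace:
  "subspace3 n Y \<Longrightarrow> set xs \<subseteq> Y \<Longrightarrow> length cs = length xs \<Longrightarrow> lincomb3 n cs xs \<in> Y"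
proof (induction xs arbitrary: cs)
  case Nil
  then show ?case by (simp add: subspace3_zero)
next
  case (Cons x xs)
  then obtain c cs' where "cs = c # cs'" by (cases cs) auto
  with Cons show ?case by (auto intro!: subspace3_add subspace3_smul)
qed

lemma span3_least: "X \<subseteq> Y \<Longrightarrow> subspace3 n Y \<Longrightarrow> span3 n X \<subseteq> Y"
  unfolding span3_def using lincomb3_in_subspace by blast

lemma lincomb3_in_vec3: "set xs \<subseteq> vec3 n \<Longrightarrow> length cs = length xs \<Longrightarrow> lincomb3 n cs xs \<in> vec3 n"
  using lincomb3_in_subspace[OF subspace3_vec3] .

lemma lincomb3_append:
  assumes "set xs \<subseteq> vec3 n" "set ys \<subseteq> vec3 n" "length cs = length xs" "length ds = length ys"
  shows "lincomb3 n (cs @ ds) (xs @ ys) = add3 (lincomb3 n cs xs) (lincomb3 n ds ys)"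
  using assms
proof (induction xs arbitrary: cs)
  case Nil
  then show ?case by (simp add: add3_zero_left lincomb3_in_vec3)
next
  case (Cons x xs)
  then obtain c cs' where cs: "cs = c # cs'" by (cases cs) auto
  with Cons show ?case
    by (simp add: add3_assoc[where n = n] length_vec3 lincomb3_in_vec3)
qed

lemma subspace3_span3:
  assumes "X \<subseteq> vec3 n"
  shows "subspace3 n (span3 n X)"
  unfolding subspace3_def
proof (intro conjI ballI)
  show "span3 n X \<subseteq> vec3 n" using span3_least[OF assms subspace3_vec3] .
  show "replicate n 0 \<in> span3 n X"
    unfolding span3_def by (rule CollectI, rule exI[of _ "[]"]) auto
  fix x y assume "x \<in> span3 n X" "y \<in> span3 n X"
  then obtain cs xs ds ys where
    x: "x = lincomb3 n cs xs" "set xs \<subseteq> X" "length cs = length xs" "set cs \<subseteq> {0..2}" and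
    y: "y = lincomb3 n ds ys" "set ys \<subseteq> X" "length ds = length ys" "set ds \<subseteq> {0..2}"
    unfolding span3_def by blast
  have "add3 x y = lincomb3 n (cs @ ds) (xs @ ys)"
    using lincomb3_append[of xs n ys cs ds] x y assms by auto
  then show "add3 x y \<in> span3 n X" unfolding span3_def using x y by fastforce
qed

lemma span3_superset: "X \<subseteq> vec3 n \<Longrightarrow> X \<subseteq> span3 n X"
proof
  fix x assume X: "X \<subseteq> vec3 n" and x: "x \<in> X"
  then have "lincomb3 n [1] [x] = x" by (auto simp: add3_zero_right smul3_one)
  then show "x \<in> span3 n X"
    unfolding span3_def using x by (intro CollectI exI[of _ "[1]"] exI[of _ "[x]"]) auto
qed

definition list_span3 :: "nat \<Rightarrow> int list list \<Rightarrow> int list set" where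
  "list_span3 n xs = {lincomb3 n cs xs | cs. length cs = length xs \<and> set cs \<subseteq> {0..2}}"

lemma card_list_span3_le: "card (list_span3 n xs) \<le> 3 ^ length xs"
proof -
  let ?A = "{cs. set cs \<subseteq> {0..2::int} \<and> length cs = length xs}"
  have "list_span3 n xs = (\<lambda>cs. lincomb3 n cs xs) ` ?A"
    unfolding list_span3_def by blast
  then have "card (list_span3 n xs) \<le> card ?A"
    by (simp add: card_image_le finite_lists_length_eq)
  then show ?thesis by (simp add: card_lists_length_eq)
qed

lemma list_span3_Nil: "list_span3 n [] = {replicate n 0}"
  by (auto simp: list_span3_def)

lemma list_span3_Cons:
  "list_span3 n (x # xs) = {add3 (smul3 c x) s | c s. c \<in> {0..2} \<and> s \<in> list_span3 n xs}"
  unfolding list_span3_def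
  apply auto
  subgoal for cs by (cases cs) auto
  subgoal for c cs by (rule exI[of _ "c # cs"]) auto
  done

lemma mod3_add_scaled:
  "((c * y mod 3 + s) mod 3 + (d * y mod 3 + t) mod 3) mod 3 = (((c + d) mod 3 * y) mod 3 + (s + t) mod 3) mod (3::int)"
proof -
  have "((c * y mod 3 + s) mod 3 + (d * y mod 3 + t) mod 3) mod 3 = (c * y + s + (d * y + t)) mod 3"
    by (simp only: mod_add_eq mod_mult_left_eq mod_add_left_eq mod_add_right_eq)
  also have "\<dots> = ((c + d) * y + (s + t)) mod 3" by (simp add: algebra_simps)
  also have "\<dots> = (((c + d) mod 3 * y) mod 3 + (s + t) mod 3) mod 3"
    by (simp only: mod_add_eq mod_mult_left_eq mod_add_left_eq mod_add_right_eq)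
  finally show ?thesis .
qed

lemma list_span3_ConsI:
  "c \<in> {0..2} \<Longrightarrow> s \<in> list_span3 n xs \<Longrightarrow> add3 (smul3 c x) s \<in> list_span3 n (x # xs)"
  unfolding list_span3_Cons by blast

lemma subspace3_list_span3: "set xs \<subseteq> vec3 n \<Longrightarrow> subspace3 n (list_span3 n xs)"
proof (induction xs)
  case Nil
  then show ?case by (auto simp: list_span3_Nil subspace3_def zero_in_vec3 add3_zero_right)
next
  case (Cons x xs)
  have xv: "x \<in> vec3 n" and IH: "subspace3 n (list_span3 n xs)" using Cons by auto
  have "list_span3 n (x # xs) \<subseteq> vec3 n"
    using IH xv by (auto simp: list_span3_Cons subspace3_def length_vec3 intro!: add3_in_vec3)
  moreover have "add3 (smul3 0 x) (replicate n 0) \<in> list_span3 n (x # xs)"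
    using list_span3_ConsI subspace3_zero[OF IH] by simp
  then have "replicate n 0 \<in> list_span3 n (x # xs)"
    using xv by (simp add: smul3_zero length_vec3 add3_zero_right zero_in_vec3)
  moreover have "add3 a b \<in> list_span3 n (x # xs)"
    if ha: "a \<in> list_span3 n (x # xs)" and hb: "b \<in> list_span3 n (x # xs)" for a b
  proof -
    obtain c s where a: "a = add3 (smul3 c x) s" "s \<in> list_span3 n xs"
      using ha unfolding list_span3_Cons by blast
    obtain d t where b: "b = add3 (smul3 d x) t" "t \<in> list_span3 n xs"
      using hb unfolding list_span3_Cons by blast
    have "s \<in> vec3 n" "t \<in> vec3 n" using a b IH subspace3_subset by blast+
    then have "add3 a b = add3 (smul3 ((c + d) mod 3) x) (add3 s t)"
      using a b xv by (intro nth_equalityI) (simp_all add: length_vec3 mod3_add_scaled)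
    moreover have "add3 s t \<in> list_span3 n xs" using subspace3_add[OF IH] a b by blast
    ultimately show ?thesis using list_span3_ConsI[of "(c + d) mod 3"] by simp
  qed
  ultimately show ?case by (simp add: subspace3_def)
qed

lemma set_subset_list_span3: "set xs \<subseteq> vec3 n \<Longrightarrow> set xs \<subseteq> list_span3 n xs"
proof (induction xs)
  case (Cons x xs)
  have xv: "x \<in> vec3 n" and IH: "set xs \<subseteq> list_span3 n xs" using Cons by auto
  have sub: "subspace3 n (list_span3 n xs)" using Cons.prems subspace3_list_span3 by simp
  have "x = add3 (smul3 1 x) (replicate n 0)"
    using xv by (simp add: smul3_one add3_zero_right)
  then have "x \<in> list_span3 n (x # xs)"
    using list_span3_ConsI[of 1 "replicate n 0" n xs x] subspace3_zero[OF sub] by simp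
  moreover have "y \<in> list_span3 n (x # xs)" if y: "y \<in> set xs" for y
  proof -
    have "y \<in> vec3 n" using y IH sub subspace3_subset by blast
    then have "y = add3 (smul3 0 x) y" using xv by (simp add: smul3_zero length_vec3 add3_zero_left)
    then show ?thesis
      using list_span3_ConsI[of 0 y n xs x] y IH by auto
  qed
  ultimately show ?case by auto
qed simp

lemma span3_set_eq_list_span3:
  assumes "set xs \<subseteq> vec3 n"
  shows "span3 n (set xs) = list_span3 n xs"
proof
  show "span3 n (set xs) \<subseteq> list_span3 n xs"
    by (rule span3_least[OF set_subset_list_span3 subspace3_list_span3]) (use assms in auto)
  show "list_span3 n xs \<subseteq> span3 n (set xs)"
    unfolding list_span3_def span3_def by auto
qed

text \<open>Uses that a nonzero \<open>c - d\<close> is its own inverse in \<open>\<int>\<^sub>3\<close>.\<close>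

lemma mod3_solve_linear:
  fixes c d y u v :: int
  assumes "c \<in> {0..2}" "d \<in> {0..2}" "c \<noteq> d" "y \<in> {0..2}" "u \<in> {0..2}" "v \<in> {0..2}"
    and "(c * y mod 3 + u) mod 3 = (d * y mod 3 + v) mod 3"
  shows "y = ((c - d) * ((v + (2 * u) mod 3) mod 3)) mod 3"
proof -
  have "c \<in> {0,1,2}" "d \<in> {0,1,2}" "y \<in> {0,1,2}" "u \<in> {0,1,2}" "v \<in> {0,1,2}"
    using assms(1,2,4-6) by auto
  then show ?thesis using assms(3,7) by auto
qed

lemma inj_on_list_span3_Cons:
  assumes xs: "set (x # xs) \<subseteq> vec3 n" and x: "x \<notin> list_span3 n xs"
  shows "inj_on (\<lambda>(c, s). add3 (smul3 c x) s) ({0..2} \<times> list_span3 n xs)"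
proof (rule inj_onI, clarify)
  fix c d :: int and s t
  assume c: "c \<in> {0..2}" "s \<in> list_span3 n xs" and d: "d \<in> {0..2}" "t \<in> list_span3 n xs"
    and eq: "add3 (smul3 c x) s = add3 (smul3 d x) t"
  have S: "subspace3 n (list_span3 n xs)" using subspace3_list_span3 xs by simp
  have xv: "x \<in> vec3 n" using xs by simp
  have sv: "s \<in> vec3 n" "t \<in> vec3 n" using c d S subspace3_subset by blast+
  have "c = d"
  proof (rule ccontr)
    assume "c \<noteq> d"
    have "x = smul3 (c - d) (add3 t (smul3 2 s))"
    proof (rule nth_equalityI)
      fix i assume "i < length x"
      then have i: "i < n" using xv length_vec3 by auto
      have eq_i: "(c * x!i mod 3 + s!i) mod 3 = (d * x!i mod 3 + t!i) mod 3"
        using arg_cong[OF eq, of "\<lambda>l. l!i"] i sv xv by (simp add: length_vec3)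
      have "x!i \<in> {0..2}" "s!i \<in> {0..2}" "t!i \<in> {0..2}"
        using xv sv i by (auto simp: vec3_iff)
      then show "x ! i = smul3 (c - d) (add3 t (smul3 2 s)) ! i"
        using mod3_solve_linear[OF c(1) d(1) \<open>c \<noteq> d\<close> _ _ _ eq_i] i sv by (simp add: length_vec3)
    qed (use sv xv in \<open>simp add: length_vec3\<close>)
    moreover have "smul3 (c - d) (add3 t (smul3 2 s)) \<in> list_span3 n xs"
      using S c d by (intro subspace3_smul subspace3_add) auto
    ultimately show False using x by simp
  qed
  moreover have "s = add3 (add3 (smul3 c x) s) (smul3 2 (smul3 c x))"
    by (rule add3_eq_imp_eq_sub[OF _ sv(1) refl]) (use xv in \<open>simp add: length_vec3\<close>)
  moreover have "t = add3 (add3 (smul3 d x) t) (smul3 2 (smul3 d x))"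
    by (rule add3_eq_imp_eq_sub[OF _ sv(2) refl]) (use xv in \<open>simp add: length_vec3\<close>)
  ultimately show "c = d \<and> s = t" using eq by simp
qed

lemma card_list_span3_Cons:
  assumes "set (x # xs) \<subseteq> vec3 n" "x \<notin> list_span3 n xs"
  shows "card (list_span3 n (x # xs)) = 3 * card (list_span3 n xs)"
proof -
  have "list_span3 n (x # xs) = (\<lambda>(c, s). add3 (smul3 c x) s) ` ({0..2} \<times> list_span3 n xs)"
    unfolding list_span3_Cons by fast
  then show ?thesis
    using inj_on_list_span3_Cons[OF assms] subspace3_finite[OF subspace3_list_span3] assms(1)
    by (simp add: card_image card_cartesian_product)
qed

lemma subspace3_basis_from:
  assumes V: "subspace3 n V"
  shows "set xs \<subseteq> V \<Longrightarrow> card (list_span3 n xs) = 3 ^ length xs \<Longrightarrow>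
    \<exists>ys. set ys \<subseteq> V \<and> list_span3 n ys = V \<and> card V = 3 ^ length ys"
proof (induction "card V - card (list_span3 n xs)" arbitrary: xs rule: less_induct)
  case less
  have sub: "list_span3 n xs \<subseteq> V"
    using span3_least[OF less.prems(1) V] span3_set_eq_list_span3 less.prems(1) subspace3_subset[OF V]
    by (metis order_trans)
  show ?case
  proof (cases "list_span3 n xs = V")
    case True
    then show ?thesis using less.prems by blast
  next
    case False
    then obtain x where x: "x \<in> V" "x \<notin> list_span3 n xs" using sub by blast
    have xs': "set (x # xs) \<subseteq> V" using x less.prems(1) by simp
    then have "set (x # xs) \<subseteq> vec3 n" using subspace3_subset[OF V] by blast
    then have card: "card (list_span3 n (x # xs)) = 3 * card (list_span3 n xs)"
      using card_list_span3_Cons x(2) by blast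
    have "list_span3 n (x # xs) \<subseteq> V"
      using span3_least[OF xs' V] span3_set_eq_list_span3 xs' subspace3_subset[OF V]
      by (metis order_trans)
    then have "card (list_span3 n (x # xs)) \<le> card V"
      using card_mono[OF subspace3_finite[OF V]] by blast
    moreover have "0 < card (list_span3 n xs)" using less.prems(2) by simp
    ultimately have "card V - card (list_span3 n (x # xs)) < card V - card (list_span3 n xs)"
      using card by linarith
    moreover have "card (list_span3 n (x # xs)) = 3 ^ length (x # xs)"
      using card less.prems(2) by simp
    ultimately show ?thesis using less.hyps xs' by blast
  qed
qed

lemma card_subspace3:
  assumes V: "subspace3 n V"
  shows "card V = 3 ^ dim3 n V"
proof -
  obtain xs where xs: "set xs \<subseteq> V" "list_span3 n xs = V" "card V = 3 ^ length xs"
    using subspace3_basis_from[OF V, of "[]"] by (auto simp: list_span3_Nil)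
  let ?P = "\<lambda>k. \<exists>xs. length xs = k \<and> set xs \<subseteq> V \<and> span3 n (set xs) = V"
  have P: "?P (length xs)"
    using xs span3_set_eq_list_span3 subspace3_subset[OF V] by (metis order_trans)
  then have "dim3 n V \<le> length xs" unfolding dim3_def by (rule Least_le)
  moreover obtain ys where ys: "length ys = dim3 n V" "set ys \<subseteq> V" "span3 n (set ys) = V"
    using LeastI[of ?P, OF P] unfolding dim3_def by blast
  then have "card V \<le> 3 ^ dim3 n V"
    using card_list_span3_le[of n ys] span3_set_eq_list_span3 subspace3_subset[OF V]
    by (metis order_trans)
  ultimately show ?thesis
    using xs(3) power_increasing[of "dim3 n V" "length xs" "3::nat"] by simp
qed

lemma dim3_le_iff: "subspace3 n V \<Longrightarrow> dim3 n V \<le> m \<longleftrightarrow> card V \<le> 3 ^ m"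
  by (simp add: card_subspace3 power_increasing_iff)

lemma dim3_le_length:
  assumes V: "subspace3 n V" and xs: "set xs \<subseteq> vec3 n" "V \<subseteq> span3 n (set xs)"
  shows "dim3 n V \<le> length xs"
proof -
  have "card V \<le> card (list_span3 n xs)"
    using xs span3_set_eq_list_span3 subspace3_list_span3 subspace3_finite
    by (metis card_mono)
  also have "\<dots> \<le> 3 ^ length xs" by (rule card_list_span3_le)
  finally show ?thesis using dim3_le_iff[OF V] by blast
qed

section \<open>Codewords and additive codes\<close>

lemma space_iff:
  "a \<in> space \<alpha> \<beta> \<longleftrightarrow> length (fst a) = \<alpha> \<and> (\<forall>i<\<alpha>. 0 \<le> fst a!i \<and> fst a!i \<le> 2) \<and>
     length (snd a) = \<beta> \<and> (\<forall>i<\<beta>. 0 \<le> snd a!i \<and> snd a!i \<le> 8)"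
  by (cases a) (auto simp: space_def set_conv_nth subset_iff)

lemma fst_in_vec3: "a \<in> space \<alpha> \<beta> \<Longrightarrow> fst a \<in> vec3 \<alpha>"
  by (simp add: space_iff vec3_iff)

lemma length_fst_space: "a \<in> space \<alpha> \<beta> \<Longrightarrow> length (fst a) = \<alpha>"
  by (simp add: space_iff)

lemma length_snd_space: "a \<in> space \<alpha> \<beta> \<Longrightarrow> length (snd a) = \<beta>"
  by (simp add: space_iff)

lemma nth_snd_space: "a \<in> space \<alpha> \<beta> \<Longrightarrow> i < \<beta> \<Longrightarrow> 0 \<le> snd a!i \<and> snd a!i \<le> 8"
  by (simp add: space_iff)

lemma mod9_le8 [simp]: "(a::int) mod 9 \<le> 8"
  using pos_mod_bound[of 9 a] by linarith

lemma fst_cw_add: "fst (cw_add a b) = add3 (fst a) (fst b)"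
  by (simp add: cw_add_def add3_def)

lemma length_snd_cw_add [simp]: "length (snd (cw_add a b)) = min (length (snd a)) (length (snd b))"
  by (simp add: cw_add_def)

lemma nth_snd_cw_add [simp]:
  "i < length (snd a) \<Longrightarrow> i < length (snd b) \<Longrightarrow> snd (cw_add a b) ! i = (snd a!i + snd b!i) mod 9"
  by (simp add: cw_add_def)

lemma fst_cw_smul: "fst (cw_smul k a) = smul3 k (fst a)"
  by (simp add: cw_smul_def smul3_def)

lemma length_snd_cw_smul [simp]: "length (snd (cw_smul k a)) = length (snd a)"
  by (simp add: cw_smul_def)

lemma nth_snd_cw_smul [simp]: "i < length (snd a) \<Longrightarrow> snd (cw_smul k a) ! i = (k * snd a!i) mod 9"
  by (simp add: cw_smul_def)

lemma length_fst_cw_mult [simp]: "length (fst (cw_mult a b)) = min (length (fst a)) (length (fst b))"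
  by (simp add: cw_mult_def)

lemma nth_fst_cw_mult [simp]:
  "i < length (fst a) \<Longrightarrow> i < length (fst b) \<Longrightarrow> fst (cw_mult a b) ! i = (fst a!i * fst b!i) mod 3"
  by (simp add: cw_mult_def)

lemma length_snd_cw_mult [simp]: "length (snd (cw_mult a b)) = min (length (snd a)) (length (snd b))"
  by (simp add: cw_mult_def)

lemma nth_snd_cw_mult [simp]:
  "i < length (snd a) \<Longrightarrow> i < length (snd b) \<Longrightarrow> snd (cw_mult a b) ! i = (snd a!i * snd b!i) mod 9"
  by (simp add: cw_mult_def)

lemma fst_zero_cw [simp]: "fst (zero_cw \<alpha> \<beta>) = replicate \<alpha> 0"
  by (simp add: zero_cw_def)

lemma snd_zero_cw [simp]: "snd (zero_cw \<alpha> \<beta>) = replicate \<beta> 0"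
  by (simp add: zero_cw_def)

lemma zero_cw_in_space: "zero_cw \<alpha> \<beta> \<in> space \<alpha> \<beta>"
  by (simp add: space_iff)

lemma cw_add_in_space: "a \<in> space \<alpha> \<beta> \<Longrightarrow> b \<in> space \<alpha> \<beta> \<Longrightarrow> cw_add a b \<in> space \<alpha> \<beta>"
  by (simp add: space_iff fst_cw_add)

lemma cw_smul_in_space: "a \<in> space \<alpha> \<beta> \<Longrightarrow> cw_smul k a \<in> space \<alpha> \<beta>"
  by (simp add: space_iff fst_cw_smul)

lemma cw_mult_in_space: "a \<in> space \<alpha> \<beta> \<Longrightarrow> b \<in> space \<alpha> \<beta> \<Longrightarrow> cw_mult a b \<in> space \<alpha> \<beta>"
  by (simp add: space_iff)

lemma cw_add_commute: "cw_add a b = cw_add b a"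
  by (rule prod_eqI) (simp_all add: fst_cw_add add3_commute list_eq_iff_nth_eq add.commute)

lemma cw_add_assoc:
  "a \<in> space \<alpha> \<beta> \<Longrightarrow> b \<in> space \<alpha> \<beta> \<Longrightarrow> c \<in> space \<alpha> \<beta> \<Longrightarrow>
   cw_add (cw_add a b) c = cw_add a (cw_add b c)"
  by (rule prod_eqI)
    (simp_all add: fst_cw_add add3_assoc length_fst_space length_snd_space list_eq_iff_nth_eq
      mod_simps add.assoc)

lemma cw_add_zero_right: "a \<in> space \<alpha> \<beta> \<Longrightarrow> cw_add a (zero_cw \<alpha> \<beta>) = a"
  by (rule prod_eqI) (auto simp: fst_cw_add add3_zero_right fst_in_vec3 list_eq_iff_nth_eq space_iff)

lemma cw_add_zero_left: "a \<in> space \<alpha> \<beta> \<Longrightarrow> cw_add (zero_cw \<alpha> \<beta>) a = a"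
  using cw_add_zero_right cw_add_commute by metis

lemma cw_add_cw_add_swap:
  assumes "a \<in> space \<alpha> \<beta>" "b \<in> space \<alpha> \<beta>" "c \<in> space \<alpha> \<beta>" "d \<in> space \<alpha> \<beta>"
  shows "cw_add (cw_add a b) (cw_add c d) = cw_add (cw_add a c) (cw_add b d)"
proof -
  have "cw_add b (cw_add c d) = cw_add (cw_add b c) d" using assms(2-4) by (simp add: cw_add_assoc)
  also have "\<dots> = cw_add c (cw_add b d)"
    using assms(2-4) by (simp add: cw_add_commute[of b c] cw_add_assoc)
  finally show ?thesis using assms by (simp add: cw_add_assoc cw_add_in_space)
qed

lemma cw_smul_add:
  "a \<in> space \<alpha> \<beta> \<Longrightarrow> b \<in> space \<alpha> \<beta> \<Longrightarrow> cw_smul k (cw_add a b) = cw_add (cw_smul k a) (cw_smul k b)"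
  by (rule prod_eqI)
    (simp_all add: fst_cw_add fst_cw_smul length_fst_space length_snd_space list_eq_iff_nth_eq
      mod_simps algebra_simps)

lemma cw_smul_zero: "a \<in> space \<alpha> \<beta> \<Longrightarrow> cw_smul 0 a = zero_cw \<alpha> \<beta>"
  by (rule prod_eqI) (simp_all add: fst_cw_smul smul3_zero length_fst_space length_snd_space list_eq_iff_nth_eq)

lemma cw_smul_plus_one: "cw_smul (k + 1) a = cw_add a (cw_smul k a)"
  by (rule prod_eqI)
    (simp_all add: fst_cw_add fst_cw_smul list_eq_iff_nth_eq mod_simps algebra_simps)

definition cw_neg :: "int list \<times> int list \<Rightarrow> int list \<times> int list" where
  "cw_neg a = cw_smul 8 a"

lemma cw_neg_in_space: "a \<in> space \<alpha> \<beta> \<Longrightarrow> cw_neg a \<in> space \<alpha> \<beta>"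
  by (simp add: cw_neg_def cw_smul_in_space)

lemma cw_add_neg: "a \<in> space \<alpha> \<beta> \<Longrightarrow> cw_add a (cw_neg a) = zero_cw \<alpha> \<beta>"
proof (rule prod_eqI)
  have "(x + (8 * x) mod 3) mod 3 = 0" "(x + (8 * x) mod 9) mod 9 = 0" for x :: int
    by presburger+
  then show "fst (cw_add a (cw_neg a)) = fst (zero_cw \<alpha> \<beta>)"
    and "snd (cw_add a (cw_neg a)) = snd (zero_cw \<alpha> \<beta>)" if "a \<in> space \<alpha> \<beta>"
    using that by (simp_all add: cw_neg_def fst_cw_add fst_cw_smul length_fst_space length_snd_space
        list_eq_iff_nth_eq)
qed

lemma cw_add_right_cancel:
  assumes "a \<in> space \<alpha> \<beta>" "b \<in> space \<alpha> \<beta>" "c \<in> space \<alpha> \<beta>" "cw_add a c = cw_add b c"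
  shows "a = b"
proof -
  have "cw_add (cw_add a c) (cw_neg c) = cw_add (cw_add b c) (cw_neg c)" using assms(4) by simp
  then show "a = b"
    using assms cw_add_assoc[of _ \<alpha> \<beta> c "cw_neg c"] cw_neg_in_space cw_add_neg cw_add_zero_right
    by metis
qed

lemma additive_code_space: "additive_code \<alpha> \<beta> C \<Longrightarrow> a \<in> C \<Longrightarrow> a \<in> space \<alpha> \<beta>"
  by (auto simp: additive_code_def)

lemma additive_code_add: "additive_code \<alpha> \<beta> C \<Longrightarrow> a \<in> C \<Longrightarrow> b \<in> C \<Longrightarrow> cw_add a b \<in> C"
  by (auto simp: additive_code_def)

lemma additive_code_zero: "additive_code \<alpha> \<beta> C \<Longrightarrow> zero_cw \<alpha> \<beta> \<in> C"
  by (auto simp: additive_code_def)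

lemma additive_code_smul:
  assumes C: "additive_code \<alpha> \<beta> C" and a: "a \<in> C"
  shows "cw_smul (int k) a \<in> C"
proof (induction k)
  case 0
  then show ?case using cw_smul_zero[OF additive_code_space[OF C a]] additive_code_zero[OF C] by simp
next
  case (Suc k)
  then show ?case using C a cw_smul_plus_one[of "int k" a] additive_code_add by (simp add: add.commute)
qed

lemma additive_code_neg: "additive_code \<alpha> \<beta> C \<Longrightarrow> a \<in> C \<Longrightarrow> cw_neg a \<in> C"
  using additive_code_smul[of \<alpha> \<beta> C a 8] by (simp add: cw_neg_def)

lemma finite_space: "finite (space \<alpha> \<beta>)"
proof -
  have "space \<alpha> \<beta> \<subseteq> {xs. set xs \<subseteq> {0..2} \<and> length xs = \<alpha>} \<times> {xs. set xs \<subseteq> {0..8} \<and> length xs = \<beta>}"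
    by (auto simp: space_def)
  then show ?thesis by (rule finite_subset) (simp add: finite_lists_length_eq)
qed

lemma gen_matrix_induct:
  assumes C: "additive_code \<alpha> \<beta> C" and gm: "is_gen_matrix \<alpha> \<beta> C us vs"
    and X: "X \<subseteq> space \<alpha> \<beta>" "zero_cw \<alpha> \<beta> \<in> X"
    and step: "\<And>w b. w \<in> set us \<union> set vs \<Longrightarrow> b \<in> X \<Longrightarrow> cw_add w b \<in> X"
  shows "C \<subseteq> X"
proof
  fix c assume "c \<in> C"
  then obtain ls ns where ls: "set ls \<subseteq> {0..2}" and ns: "set ns \<subseteq> {0..8}"
    and c: "c = gen_comb \<alpha> \<beta> us vs ls ns"
    using gm unfolding is_gen_matrix_def bij_betw_def by force
  have gens: "set us \<union> set vs \<subseteq> space \<alpha> \<beta>"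
    using gm C by (auto simp: is_gen_matrix_def additive_code_def)
  have multiple: "cw_add (cw_smul (int k) w) b \<in> X" if w: "w \<in> set us \<union> set vs" and "b \<in> X" for k w b
    using \<open>b \<in> X\<close>
  proof (induction k arbitrary: b)
    case 0
    have "w \<in> space \<alpha> \<beta>" "b \<in> space \<alpha> \<beta>" using w gens X(1) 0 by auto
    then show ?case using 0 by (simp add: cw_smul_zero cw_add_zero_left)
  next
    case (Suc k)
    have "w \<in> space \<alpha> \<beta>" "b \<in> space \<alpha> \<beta>" using w gens X(1) Suc.prems by auto
    then have "cw_add (cw_smul (int (Suc k)) w) b = cw_add w (cw_add (cw_smul (int k) w) b)"
      using cw_smul_plus_one[of "int k" w] by (simp add: add.commute cw_add_assoc cw_smul_in_space)
    then show ?case using Suc step w by simp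
  qed
  have terms: "cw_add t b \<in> X" if "t \<in> set (map2 cw_smul ls us @ map2 cw_smul ns vs)" "b \<in> X" for t b
  proof -
    obtain l w where lw: "(l, w) \<in> set (zip ls us) \<union> set (zip ns vs)" "t = cw_smul l w"
      using \<open>t \<in> _\<close> by auto
    then have "0 \<le> l" "w \<in> set us \<union> set vs"
      using ls ns by (auto dest: set_zip_leftD set_zip_rightD)
    then show ?thesis using multiple[of w b "nat l"] \<open>b \<in> X\<close> lw(2) by simp
  qed
  have "foldr cw_add ts (zero_cw \<alpha> \<beta>) \<in> X" if "set ts \<subseteq> set (map2 cw_smul ls us @ map2 cw_smul ns vs)" for ts
    using that by (induction ts) (auto simp: X(2) terms)
  then show "c \<in> X" unfolding c gen_comb_def by blast
qed

lemma card_gen_matrix_code: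
  assumes "is_gen_matrix \<alpha> \<beta> C us vs"
  shows "card C = 3 ^ (length us + 2 * length vs)"
proof -
  let ?A = "{ls. set ls \<subseteq> {0..2::int} \<and> length ls = length us}"
  let ?B = "{ns. set ns \<subseteq> {0..8::int} \<and> length ns = length vs}"
  have "bij_betw (\<lambda>(ls, ns). gen_comb \<alpha> \<beta> us vs ls ns) (?A \<times> ?B) C"
    using assms unfolding is_gen_matrix_def by (simp add: conj_commute)
  then have "card C = card (?A \<times> ?B)" by (simp add: bij_betw_same_card)
  also have "\<dots> = 3 ^ length us * 9 ^ length vs"
    by (simp add: card_cartesian_product card_lists_length_eq)
  finally show ?thesis by (simp add: power_add power_mult)
qed

section \<open>The Gray map\<close>

lemma length_phi [simp]: "length (phi s) = 3"
  by (simp add: phi_def Let_def)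

lemma phi_in_vec3: "phi s \<in> vec3 3"
  by (simp add: phi_def Let_def vec3_def)

lemma Phi_in_vec3:
  assumes a: "a \<in> space \<alpha> \<beta>"
  shows "Phi a \<in> vec3 (\<alpha> + 3 * \<beta>)"
proof -
  have "concat (map phi (snd a)) \<in> vec3 (3 * length (snd a))"
    by (rule concat_map_in_vec3) (rule phi_in_vec3)
  then show ?thesis
    using append_in_vec3[OF fst_in_vec3[OF a]] length_snd_space[OF a] unfolding Phi_def by simp
qed

lemma Phi_conv_nth:
  assumes a: "a \<in> space \<alpha> \<beta>"
  shows "Phi a = fst a @ concat (map (\<lambda>i. phi (snd a ! i)) [0..<\<beta>])"
proof -
  have "map phi (snd a) = map (\<lambda>i. phi (snd a ! i)) [0..<\<beta>]"
    by (rule nth_equalityI) (simp_all add: length_snd_space[OF a])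
  then show ?thesis unfolding Phi_def by simp
qed

lemma Phi_zero_cw: "Phi (zero_cw \<alpha> \<beta>) = replicate (\<alpha> + 3 * \<beta>) 0"
proof -
  have "concat (map phi (replicate \<beta> 0)) = replicate (3 * \<beta>) 0"
    by (induction \<beta>) (auto simp: phi_def numeral_3_eq_3)
  then show ?thesis by (simp add: Phi_def replicate_add)
qed

lemma phi_decode: "s \<in> {0..8} \<Longrightarrow> s = 3 * (phi s ! 0) + ((phi s ! 1 - phi s ! 0) mod 3)"
proof -
  assume "s \<in> {0..8}"
  then have "s \<in> {0, 1, 2, 3, 4, 5, 6, 7, 8}" by auto
  then show ?thesis by (auto simp: phi_def Let_def)
qed

lemma concat_map_phi_inj:
  "length ys = length zs \<Longrightarrow> concat (map phi ys) = concat (map phi zs) \<Longrightarrow> map phi ys = map phi zs"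
proof (induction ys arbitrary: zs)
  case (Cons y ys)
  then obtain z zs' where zs: "zs = z # zs'" by (cases zs) auto
  then have "phi y = phi z" "concat (map phi ys) = concat (map phi zs')"
    using Cons.prems by (simp_all add: append_eq_append_conv)
  then show ?case using Cons zs by simp
qed simp

lemma inj_on_Phi: "inj_on Phi (space \<alpha> \<beta>)"
proof (rule inj_onI)
  fix a b assume a: "a \<in> space \<alpha> \<beta>" and b: "b \<in> space \<alpha> \<beta>" and eq: "Phi a = Phi b"
  have fst: "fst a = fst b" and "concat (map phi (snd a)) = concat (map phi (snd b))"
    using eq length_fst_space[OF a] length_fst_space[OF b] unfolding Phi_def
    by (simp_all add: append_eq_append_conv)
  then have phis: "map phi (snd a) = map phi (snd b)"
    using concat_map_phi_inj length_snd_space[OF a] length_snd_space[OF b] by simp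
  have "snd a ! i = snd b ! i" if "i < \<beta>" for i
  proof -
    have "phi (snd a ! i) = phi (snd b ! i)"
      using arg_cong[OF phis, of "\<lambda>l. l ! i"] that a b by (simp add: length_snd_space)
    then show ?thesis
      using phi_decode[of "snd a ! i"] phi_decode[of "snd b ! i"] nth_snd_space a b that by simp
  qed
  then have "snd a = snd b" using a b by (simp add: list_eq_iff_nth_eq length_snd_space)
  with fst show "a = b" by (rule prod_eqI)
qed

definition res3 :: "int list \<times> int list \<Rightarrow> nat \<Rightarrow> int" where
  "res3 a i = snd a ! i mod 3"

lemma res3_in: "res3 a i \<in> {0, 1, 2}"
  by (auto simp: res3_def)

lemma res3_cw_add:
  "a \<in> space \<alpha> \<beta> \<Longrightarrow> b \<in> space \<alpha> \<beta> \<Longrightarrow> i < \<beta> \<Longrightarrow> res3 (cw_add a b) i = (res3 a i + res3 b i) mod 3"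
  by (simp add: res3_def length_snd_space mod_mod_cancel mod_simps)

lemma res3_cw_mult:
  "a \<in> space \<alpha> \<beta> \<Longrightarrow> b \<in> space \<alpha> \<beta> \<Longrightarrow> i < \<beta> \<Longrightarrow> res3 (cw_mult a b) i = (res3 a i * res3 b i) mod 3"
  by (simp add: res3_def length_snd_space mod_mod_cancel mod_simps)

lemma res3_zero_cw: "i < \<beta> \<Longrightarrow> res3 (zero_cw \<alpha> \<beta>) i = 0"
  by (simp add: res3_def)

lemma cw_smul_3_eq_zero_iff:
  assumes "a \<in> space \<alpha> \<beta>"
  shows "cw_smul 3 a = zero_cw \<alpha> \<beta> \<longleftrightarrow> (\<forall>i<\<beta>. res3 a i = 0)"
proof -
  have "(3 * x) mod 9 = 3 * (x mod 3)" for x :: int using mod_mult_mult1[of 3 x 3] by simp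
  then show ?thesis using assms
    by (auto simp: list_eq_iff_nth_eq prod_eq_iff fst_cw_smul length_fst_space length_snd_space res3_def)
qed

text \<open>\<open>tripled \<alpha> \<beta> h\<close> is the Gray image of the order-3 codeword \<open>(0, 3h)\<close>.\<close>

definition tripled :: "nat \<Rightarrow> nat \<Rightarrow> (nat \<Rightarrow> int) \<Rightarrow> int list" where
  "tripled \<alpha> \<beta> h = replicate \<alpha> 0 @ concat (map (\<lambda>i. replicate 3 (h i mod 3)) [0..<\<beta>])"

lemma tripled_in_vec3: "tripled \<alpha> \<beta> h \<in> vec3 (\<alpha> + 3 * \<beta>)"
  using concat_map_in_vec3[of "[0..<\<beta>]" "\<lambda>i. replicate 3 (h i mod 3)"]
  by (auto simp: tripled_def vec3_def)

lemma add3_tripled: "add3 (tripled \<alpha> \<beta> h) (tripled \<alpha> \<beta> g) = tripled \<alpha> \<beta> (\<lambda>i. h i + g i)"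
  by (simp add: tripled_def add3_append add3_concat add3_zero_right zero_in_vec3)
    (simp add: add3_def zip_replicate mod_add_eq)

lemma smul3_tripled: "smul3 c (tripled \<alpha> \<beta> h) = tripled \<alpha> \<beta> (\<lambda>i. c * h i)"
  by (simp add: tripled_def smul3_append smul3_def map_concat comp_def mod_mult_right_eq)

lemma tripled_cong: "(\<And>i. i < \<beta> \<Longrightarrow> h i mod 3 = g i mod 3) \<Longrightarrow> tripled \<alpha> \<beta> h = tripled \<alpha> \<beta> g"
  unfolding tripled_def by (intro arg_cong2[where f="(@)"] arg_cong[where f=concat] map_cong) auto

lemma tripled_eq_zero: "(\<And>i. i < \<beta> \<Longrightarrow> h i mod 3 = 0) \<Longrightarrow> tripled \<alpha> \<beta> h = replicate (\<alpha> + 3 * \<beta>) 0"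
proof -
  assume "\<And>i. i < \<beta> \<Longrightarrow> h i mod 3 = 0"
  then have "tripled \<alpha> \<beta> h = tripled \<alpha> \<beta> (\<lambda>i. 0)" by (intro tripled_cong) simp
  also have "\<dots> = replicate \<alpha> 0 @ concat (map (\<lambda>i. replicate 3 0) [0..<\<beta>])"
    by (simp add: tripled_def)
  also have "concat (map (\<lambda>i. replicate 3 (0::int)) ks) = replicate (3 * length ks) 0" for ks :: "nat list"
    by (induction ks) (simp_all add: replicate_add[symmetric])
  finally show ?thesis by (simp add: replicate_add)
qed

text \<open>For digits \<open>s, t \<in> {0, 1, 2}\<close>, \<open>carry3 s t\<close> is minus the carry of \<open>s + t\<close>, written as a
  polynomial in the digits.  Its monomials \<open>st\<close>, \<open>s\<^sup>2t\<close>, \<open>st\<^sup>2\<close> are the source of the componentwise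
  products in the generators of the span.\<close>

definition carry3 :: "int \<Rightarrow> int \<Rightarrow> int" where
  "carry3 s t = (s * t + s * s * t + s * t * t) mod 3"

lemma phi_add:
  assumes "s \<in> {0..8}" "t \<in> {0..8}"
  shows "add3 (phi s) (phi t) = add3 (phi ((s + t) mod 9)) (replicate 3 (carry3 (s mod 3) (t mod 3) mod 3))"
proof -
  have "s \<in> {0, 1, 2, 3, 4, 5, 6, 7, 8}" "t \<in> {0, 1, 2, 3, 4, 5, 6, 7, 8}" using assms by auto
  then show ?thesis by (auto simp: phi_def carry3_def Let_def add3_def numeral_3_eq_3)
qed

lemma Phi_add:
  assumes a: "a \<in> space \<alpha> \<beta>" and b: "b \<in> space \<alpha> \<beta>"
  shows "add3 (Phi a) (Phi b) = add3 (Phi (cw_add a b)) (tripled \<alpha> \<beta> (\<lambda>i. carry3 (res3 a i) (res3 b i)))"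
proof -
  have ab: "cw_add a b \<in> space \<alpha> \<beta>" using cw_add_in_space[OF a b] .
  have fst: "add3 (fst (cw_add a b)) (replicate \<alpha> 0) = add3 (fst a) (fst b)"
    using add3_zero_right[OF fst_in_vec3[OF ab]] by (simp add: fst_cw_add)
  have "add3 (phi (snd a ! i)) (phi (snd b ! i)) =
     add3 (phi (snd (cw_add a b) ! i)) (replicate 3 (carry3 (res3 a i) (res3 b i) mod 3))" if "i < \<beta>" for i
    using phi_add nth_snd_space[OF a that] nth_snd_space[OF b that] that
    by (simp add: length_snd_space[OF a] length_snd_space[OF b] res3_def)
  then have snd: "concat (map (\<lambda>i. add3 (phi (snd a ! i)) (phi (snd b ! i))) [0..<\<beta>]) =
      concat (map (\<lambda>i. add3 (phi (snd (cw_add a b) ! i)) (replicate 3 (carry3 (res3 a i) (res3 b i) mod 3))) [0..<\<beta>])"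
    by (intro arg_cong[where f=concat] map_cong) auto
  show ?thesis
    unfolding Phi_conv_nth[OF a] Phi_conv_nth[OF b] Phi_conv_nth[OF ab] tripled_def
    using fst snd length_fst_space[OF a] length_fst_space[OF b] length_fst_space[OF ab]
    by (simp add: add3_append add3_concat)
qed

lemma Phi_add_res3_zero:
  assumes a: "a \<in> space \<alpha> \<beta>" and t: "t \<in> space \<alpha> \<beta>" and "\<forall>i<\<beta>. res3 t i = 0"
  shows "Phi (cw_add a t) = add3 (Phi a) (Phi t)"
proof -
  have "tripled \<alpha> \<beta> (\<lambda>i. carry3 (res3 a i) (res3 t i)) = replicate (\<alpha> + 3 * \<beta>) 0"
    using assms(3) by (intro tripled_eq_zero) (simp add: carry3_def)
  then show ?thesis
    using Phi_add[OF a t] add3_zero_right[OF Phi_in_vec3[OF cw_add_in_space[OF a t]]] by simp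
qed

lemma phi_times3: "phi ((3 * x) mod 9) = replicate 3 (x mod 3)"
proof -
  have "(3 * x) mod 9 = 3 * (x mod 3)" using mod_mult_mult1[of 3 x 3] by simp
  moreover have "x mod 3 \<in> {0, 1, 2}" by auto
  ultimately show ?thesis by (auto simp: phi_def Let_def numeral_3_eq_3)
qed

lemma Phi_cw_smul_3:
  assumes a: "a \<in> space \<alpha> \<beta>"
  shows "Phi (cw_smul 3 a) = tripled \<alpha> \<beta> (res3 a)"
proof -
  have "fst (cw_smul 3 a) = replicate \<alpha> 0"
    using a by (simp add: fst_cw_smul list_eq_iff_nth_eq length_fst_space)
  moreover have "phi (snd (cw_smul 3 a) ! i) = replicate 3 (res3 a i mod 3)" if "i < \<beta>" for i
    using that a by (simp add: phi_times3 res3_def length_snd_space)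
  ultimately show ?thesis
    unfolding Phi_conv_nth[OF cw_smul_in_space[OF a]] tripled_def
    by (intro arg_cong2[where f="(@)"] arg_cong[where f=concat] map_cong) auto
qed

definition times3_cw :: "nat \<Rightarrow> nat \<Rightarrow> (nat \<Rightarrow> int) \<Rightarrow> int list \<times> int list" where
  "times3_cw \<alpha> \<beta> h = (replicate \<alpha> 0, map (\<lambda>i. 3 * (h i mod 3)) [0..<\<beta>])"

lemma times3_cw_in_space: "times3_cw \<alpha> \<beta> h \<in> space \<alpha> \<beta>"
proof -
  have "3 * (h i mod 3) \<le> 8" for i using mod3_le2[of "h i"] by linarith
  then show ?thesis by (simp add: space_iff times3_cw_def)
qed

lemma res3_times3_cw: "i < \<beta> \<Longrightarrow> res3 (times3_cw \<alpha> \<beta> h) i = 0"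
  by (simp add: res3_def times3_cw_def)

lemma Phi_times3_cw: "Phi (times3_cw \<alpha> \<beta> h) = tripled \<alpha> \<beta> h"
proof -
  have "phi (3 * (h i mod 3)) = replicate 3 (h i mod 3)" for i
    using phi_times3[of "h i mod 3"] by (simp add: mod_pos_pos_trivial)
  then show ?thesis by (simp add: Phi_def times3_cw_def tripled_def comp_def)
qed

lemma Phi_cw_smul_3_mult:
  assumes "v \<in> space \<alpha> \<beta>" "w \<in> space \<alpha> \<beta>"
  shows "Phi (cw_smul 3 (cw_mult v w)) = tripled \<alpha> \<beta> (\<lambda>i. res3 v i * res3 w i)"
proof -
  have "Phi (cw_smul 3 (cw_mult v w)) = tripled \<alpha> \<beta> (res3 (cw_mult v w))"
    using assms by (simp add: Phi_cw_smul_3 cw_mult_in_space)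
  also have "\<dots> = tripled \<alpha> \<beta> (\<lambda>i. res3 v i * res3 w i)"
    using assms by (intro tripled_cong) (simp add: res3_cw_mult)
  finally show ?thesis .
qed

lemma Phi_cw_smul_3_mult3:
  assumes "u \<in> space \<alpha> \<beta>" "v \<in> space \<alpha> \<beta>" "w \<in> space \<alpha> \<beta>"
  shows "Phi (cw_smul 3 (cw_mult u (cw_mult v w))) = tripled \<alpha> \<beta> (\<lambda>i. res3 u i * res3 v i * res3 w i)"
proof -
  have "Phi (cw_smul 3 (cw_mult u (cw_mult v w))) = tripled \<alpha> \<beta> (res3 (cw_mult u (cw_mult v w)))"
    using assms by (simp add: Phi_cw_smul_3 cw_mult_in_space)
  also have "\<dots> = tripled \<alpha> \<beta> (\<lambda>i. res3 u i * res3 v i * res3 w i)"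
    using assms
    by (intro tripled_cong) (simp add: res3_cw_mult cw_mult_in_space mod_mult_right_eq mult.assoc)
  finally show ?thesis .
qed

section \<open>The span of the Gray image\<close>

abbreviation gray_span :: "nat \<Rightarrow> nat \<Rightarrow> (int list \<times> int list) set \<Rightarrow> int list set" where
  "gray_span \<alpha> \<beta> X \<equiv> span3 (\<alpha> + 3 * \<beta>) (Phi ` X)"

lemma subspace3_gray_span: "X \<subseteq> space \<alpha> \<beta> \<Longrightarrow> subspace3 (\<alpha> + 3 * \<beta>) (gray_span \<alpha> \<beta> X)"
  using Phi_in_vec3 by (blast intro: subspace3_span3)

lemma Phi_in_gray_span: "X \<subseteq> space \<alpha> \<beta> \<Longrightarrow> a \<in> X \<Longrightarrow> Phi a \<in> gray_span \<alpha> \<beta> X"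
  using span3_superset[of "Phi ` X" "\<alpha> + 3 * \<beta>"] Phi_in_vec3 by blast

lemma tripled_in_subspace3:
  assumes "subspace3 (\<alpha> + 3 * \<beta>) Y" "tripled \<alpha> \<beta> f \<in> Y" "tripled \<alpha> \<beta> g \<in> Y"
    and "\<And>i. i < \<beta> \<Longrightarrow> h i mod 3 = (f i + c * g i) mod 3"
  shows "tripled \<alpha> \<beta> h \<in> Y"
proof -
  have "tripled \<alpha> \<beta> h = add3 (tripled \<alpha> \<beta> f) (smul3 c (tripled \<alpha> \<beta> g))"
    using assms(4) by (simp add: add3_tripled smul3_tripled cong: tripled_cong)
  then show ?thesis using assms(1-3) by (simp add: subspace3_add subspace3_smul)
qed

context
  fixes \<alpha> \<beta> :: nat and C :: "(int list \<times> int list) set"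
  assumes C: "additive_code \<alpha> \<beta> C"
begin

lemma code_subset_space: "C \<subseteq> space \<alpha> \<beta>"
  using C by (auto simp: additive_code_def)

lemma subspace3_gray_span_code: "subspace3 (\<alpha> + 3 * \<beta>) (gray_span \<alpha> \<beta> C)"
  using subspace3_gray_span[OF code_subset_space] .

lemma tripled_carry3_in_gray_span:
  assumes a: "a \<in> C" and b: "b \<in> C"
  shows "tripled \<alpha> \<beta> (\<lambda>i. carry3 (res3 a i) (res3 b i)) \<in> gray_span \<alpha> \<beta> C"
proof -
  have sp: "a \<in> space \<alpha> \<beta>" "b \<in> space \<alpha> \<beta>" using a b code_subset_space by auto
  have "tripled \<alpha> \<beta> (\<lambda>i. carry3 (res3 a i) (res3 b i)) =
      add3 (add3 (Phi a) (Phi b)) (smul3 2 (Phi (cw_add a b)))"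
    using Phi_add[OF sp] Phi_in_vec3[OF cw_add_in_space[OF sp]] tripled_in_vec3
    by (intro add3_eq_imp_eq_sub) (auto simp: length_vec3)
  also have "\<dots> \<in> gray_span \<alpha> \<beta> C"
    using a b additive_code_add[OF C a b] code_subset_space
    by (intro subspace3_add[OF subspace3_gray_span_code] subspace3_smul[OF subspace3_gray_span_code]
        Phi_in_gray_span)
  finally show ?thesis .
qed

lemma tripled_prod_in_gray_span:
  assumes v: "v \<in> C" and w: "w \<in> C"
  shows "tripled \<alpha> \<beta> (\<lambda>i. res3 v i * res3 w i) \<in> gray_span \<alpha> \<beta> C"
proof (rule tripled_in_subspace3[OF subspace3_gray_span_code
      tripled_carry3_in_gray_span[OF v additive_code_add[OF C w w]]
      tripled_carry3_in_gray_span[OF additive_code_add[OF C v v] w], where c = 1])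
  fix i assume "i < \<beta>"
  then show "(res3 v i * res3 w i) mod 3 = (carry3 (res3 v i) (res3 (cw_add w w) i) +
      1 * carry3 (res3 (cw_add v v) i) (res3 w i)) mod 3"
    using subsetD[OF code_subset_space v] subsetD[OF code_subset_space w] res3_in[of v i] res3_in[of w i]
    by (auto simp: res3_cw_add carry3_def)
qed

lemma tripled_sq_prod_in_gray_span:
  assumes v: "v \<in> C" and w: "w \<in> C"
  shows "tripled \<alpha> \<beta> (\<lambda>i. res3 v i * res3 v i * res3 w i) \<in> gray_span \<alpha> \<beta> C"
proof (rule tripled_in_subspace3[OF subspace3_gray_span_code
      tripled_carry3_in_gray_span[OF v additive_code_add[OF C w w]], where c = 2])
  show "tripled \<alpha> \<beta> (\<lambda>i. carry3 (res3 v i) (res3 w i) + 1 * (res3 v i * res3 w i)) \<in> gray_span \<alpha> \<beta> C"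
    by (rule tripled_in_subspace3[OF subspace3_gray_span_code tripled_carry3_in_gray_span[OF v w]
          tripled_prod_in_gray_span[OF v w], where c = 1]) simp
  fix i assume "i < \<beta>"
  then show "(res3 v i * res3 v i * res3 w i) mod 3 = (carry3 (res3 v i) (res3 (cw_add w w) i) +
      2 * (carry3 (res3 v i) (res3 w i) + 1 * (res3 v i * res3 w i))) mod 3"
    using subsetD[OF code_subset_space v] subsetD[OF code_subset_space w] res3_in[of v i] res3_in[of w i]
    by (auto simp: res3_cw_add carry3_def)
qed

lemma tripled_prod3_in_gray_span:
  assumes x: "x \<in> C" and y: "y \<in> C" and z: "z \<in> C"
  shows "tripled \<alpha> \<beta> (\<lambda>i. res3 x i * res3 y i * res3 z i) \<in> gray_span \<alpha> \<beta> C"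
proof (rule tripled_in_subspace3[OF subspace3_gray_span_code _
      tripled_sq_prod_in_gray_span[OF additive_code_add[OF C x y] z], where c = 2])
  show "tripled \<alpha> \<beta> (\<lambda>i. res3 x i * res3 x i * res3 z i + 1 * (res3 y i * res3 y i * res3 z i))
      \<in> gray_span \<alpha> \<beta> C"
    by (rule tripled_in_subspace3[OF subspace3_gray_span_code tripled_sq_prod_in_gray_span[OF x z]
          tripled_sq_prod_in_gray_span[OF y z], where c = 1]) simp
  fix i assume "i < \<beta>"
  then show "(res3 x i * res3 y i * res3 z i) mod 3 =
      (res3 x i * res3 x i * res3 z i + 1 * (res3 y i * res3 y i * res3 z i) +
       2 * (res3 (cw_add x y) i * res3 (cw_add x y) i * res3 z i)) mod 3"
    using subsetD[OF code_subset_space x] subsetD[OF code_subset_space y]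
      res3_in[of x i] res3_in[of y i] res3_in[of z i]
    by (auto simp: res3_cw_add)
qed

end

definition span_generators ::
  "(int list \<times> int list) list \<Rightarrow> (int list \<times> int list) list \<Rightarrow> (int list \<times> int list) set" where
  "span_generators us vs = set us \<union> set vs
     \<union> {cw_smul 3 (cw_mult (vs ! k) (vs ! l)) | k l. l \<le> k \<and> k < length vs}
     \<union> {cw_smul 3 (cw_mult (vs ! x) (cw_mult (vs ! y) (vs ! z))) | x y z. x \<le> y \<and> y \<le> z \<and> z < length vs}"

context
  fixes \<alpha> \<beta> :: nat and C :: "(int list \<times> int list) set" and us vs :: "(int list \<times> int list) list"
  assumes C: "additive_code \<alpha> \<beta> C" and gm: "is_gen_matrix \<alpha> \<beta> C us vs"
begin

abbreviation gen_span :: "int list set" where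
  "gen_span \<equiv> gray_span \<alpha> \<beta> (span_generators us vs)"

lemma rows_in_code: "set us \<subseteq> C" "set vs \<subseteq> C"
  using gm by (simp_all add: is_gen_matrix_def)

lemma row_in_code: "j < length vs \<Longrightarrow> vs ! j \<in> C"
  using rows_in_code(2) nth_mem by blast

lemma row_in_space: "j < length vs \<Longrightarrow> vs ! j \<in> space \<alpha> \<beta>"
  using row_in_code code_subset_space[OF C] by blast

lemma span_generators_subset_space: "span_generators us vs \<subseteq> space \<alpha> \<beta>"
  using rows_in_code code_subset_space[OF C] row_in_space
  unfolding span_generators_def by (auto intro!: cw_smul_in_space cw_mult_in_space)

lemma subspace3_gen_span: "subspace3 (\<alpha> + 3 * \<beta>) gen_span"
  using subspace3_gray_span[OF span_generators_subset_space] .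

lemma Phi_in_gen_span: "w \<in> span_generators us vs \<Longrightarrow> Phi w \<in> gen_span"
  using Phi_in_gray_span[OF span_generators_subset_space] .

lemma gen_span_subset: "gen_span \<subseteq> gray_span \<alpha> \<beta> C"
proof (rule span3_least[OF _ subspace3_gray_span_code[OF C]], rule image_subsetI)
  fix w assume "w \<in> span_generators us vs"
  then consider (row) "w \<in> set us \<union> set vs"
    | (pair) k l where "l \<le> k" "k < length vs" "w = cw_smul 3 (cw_mult (vs ! k) (vs ! l))"
    | (triple) x y z where "x \<le> y" "y \<le> z" "z < length vs"
        "w = cw_smul 3 (cw_mult (vs ! x) (cw_mult (vs ! y) (vs ! z)))"
    unfolding span_generators_def by blast
  then show "Phi w \<in> gray_span \<alpha> \<beta> C"
  proof cases
    case row
    then show ?thesis using rows_in_code Phi_in_gray_span[OF code_subset_space[OF C]] by blast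
  next
    case pair
    then show ?thesis
      using Phi_cw_smul_3_mult[OF row_in_space[of k] row_in_space[of l]]
        tripled_prod_in_gray_span[OF C row_in_code[of k] row_in_code[of l]] by simp
  next
    case triple
    then show ?thesis
      using Phi_cw_smul_3_mult3[OF row_in_space[of x] row_in_space[of y] row_in_space[of z]]
        tripled_prod3_in_gray_span[OF C row_in_code[of x] row_in_code[of y] row_in_code[of z]] by simp
  qed
qed

lemma tripled_prod_in_gen_span:
  assumes "j < length vs" "k < length vs"
  shows "tripled \<alpha> \<beta> (\<lambda>i. res3 (vs ! j) i * res3 (vs ! k) i) \<in> gen_span"
proof -
  have sorted: "tripled \<alpha> \<beta> (\<lambda>i. res3 (vs ! a) i * res3 (vs ! b) i) \<in> gen_span"
    if "b \<le> a" "a < length vs" for a b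
  proof -
    have "cw_smul 3 (cw_mult (vs ! a) (vs ! b)) \<in> span_generators us vs"
      unfolding span_generators_def using that by blast
    then have "Phi (cw_smul 3 (cw_mult (vs ! a) (vs ! b))) \<in> gen_span" by (rule Phi_in_gen_span)
    then show ?thesis using that Phi_cw_smul_3_mult[OF row_in_space[of a] row_in_space[of b]] by simp
  qed
  show ?thesis
    using sorted[of k j] sorted[of j k] assms by (cases "k \<le> j") (simp_all add: mult.commute)
qed

lemma tripled_prod3_in_gen_span:
  assumes "x < length vs" "y < length vs" "z < length vs"
  shows "tripled \<alpha> \<beta> (\<lambda>i. res3 (vs ! x) i * res3 (vs ! y) i * res3 (vs ! z) i) \<in> gen_span"
proof -
  have sorted: "tripled \<alpha> \<beta> (\<lambda>i. res3 (vs ! a) i * res3 (vs ! b) i * res3 (vs ! c) i) \<in> gen_span"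
    if "a \<le> b" "b \<le> c" "c < length vs" for a b c
  proof -
    have "cw_smul 3 (cw_mult (vs ! a) (cw_mult (vs ! b) (vs ! c))) \<in> span_generators us vs"
      unfolding span_generators_def using that by blast
    then have "Phi (cw_smul 3 (cw_mult (vs ! a) (cw_mult (vs ! b) (vs ! c)))) \<in> gen_span"
      by (rule Phi_in_gen_span)
    then show ?thesis
      using that Phi_cw_smul_3_mult3[OF row_in_space[of a] row_in_space[of b] row_in_space[of c]]
      by simp
  qed
  consider "x \<le> y" "y \<le> z" | "x \<le> z" "z \<le> y" | "y \<le> x" "x \<le> z"
    | "y \<le> z" "z \<le> x" | "z \<le> x" "x \<le> y" | "z \<le> y" "y \<le> x"
    by linarith
  then show ?thesis
    by cases (use assms sorted[of x y z] sorted[of x z y] sorted[of y x z] sorted[of y z x]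
        sorted[of z x y] sorted[of z y x] in \<open>simp_all add: ac_simps\<close>)
qed

text \<open>Adding a row \<open>v\<close> of order 9 to \<open>b\<close> changes \<open>Phi b\<close> by the carry of \<open>v\<close> and \<open>b\<close>; the
  invariant keeps in the span every product of residues that such carries produce.\<close>

definition span_invariant :: "int list \<times> int list \<Rightarrow> bool" where
  "span_invariant b \<longleftrightarrow> b \<in> space \<alpha> \<beta> \<and> Phi b \<in> gen_span \<and>
     (\<forall>j<length vs. tripled \<alpha> \<beta> (\<lambda>i. res3 (vs ! j) i * res3 b i) \<in> gen_span) \<and>
     (\<forall>j<length vs. \<forall>k<length vs.
        tripled \<alpha> \<beta> (\<lambda>i. res3 (vs ! j) i * res3 (vs ! k) i * res3 b i) \<in> gen_span) \<and>
     (\<forall>j<length vs. tripled \<alpha> \<beta> (\<lambda>i. res3 (vs ! j) i * res3 b i * res3 b i) \<in> gen_span)"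

lemma span_invariant_zero: "span_invariant (zero_cw \<alpha> \<beta>)"
  unfolding span_invariant_def
  using subspace3_zero[OF subspace3_gen_span]
  by (simp add: zero_cw_in_space Phi_zero_cw res3_zero_cw tripled_eq_zero)

lemma span_invariant_add_order3:
  assumes u: "u \<in> set us" and b: "span_invariant b"
  shows "span_invariant (cw_add u b)"
proof -
  have us: "u \<in> space \<alpha> \<beta>" using u rows_in_code code_subset_space[OF C] by blast
  have bs: "b \<in> space \<alpha> \<beta>" using b by (simp add: span_invariant_def)
  have "cw_smul 3 u = zero_cw \<alpha> \<beta>" using gm u by (simp add: is_gen_matrix_def order3_def)
  then have ru: "\<forall>i<\<beta>. res3 u i = 0" using cw_smul_3_eq_zero_iff[OF us] by blast
  have res: "res3 (cw_add u b) i = res3 b i" if "i < \<beta>" for i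
    using res3_cw_add[OF us bs that] ru that by (simp add: res3_def)
  have "Phi (cw_add u b) = add3 (Phi u) (Phi b)"
    using Phi_add_res3_zero[OF bs us ru] by (simp add: cw_add_commute add3_commute)
  moreover have "Phi u \<in> gen_span" using u Phi_in_gen_span by (simp add: span_generators_def)
  ultimately have "Phi (cw_add u b) \<in> gen_span"
    using b subspace3_add[OF subspace3_gen_span] by (simp add: span_invariant_def)
  moreover have
    "tripled \<alpha> \<beta> (\<lambda>i. res3 (vs ! j) i * res3 (cw_add u b) i) = tripled \<alpha> \<beta> (\<lambda>i. res3 (vs ! j) i * res3 b i)"
    "tripled \<alpha> \<beta> (\<lambda>i. res3 (vs ! j) i * res3 (vs ! k) i * res3 (cw_add u b) i) =
       tripled \<alpha> \<beta> (\<lambda>i. res3 (vs ! j) i * res3 (vs ! k) i * res3 b i)"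
    "tripled \<alpha> \<beta> (\<lambda>i. res3 (vs ! j) i * res3 (cw_add u b) i * res3 (cw_add u b) i) =
       tripled \<alpha> \<beta> (\<lambda>i. res3 (vs ! j) i * res3 b i * res3 b i)" for j k
    by (intro tripled_cong; simp add: res)+
  ultimately show ?thesis
    using b cw_add_in_space[OF us bs] by (simp add: span_invariant_def)
qed

lemma span_invariantD:
  assumes "span_invariant b"
  shows "b \<in> space \<alpha> \<beta>" "Phi b \<in> gen_span"
    and "j < length vs \<Longrightarrow> tripled \<alpha> \<beta> (\<lambda>i. res3 (vs ! j) i * res3 b i) \<in> gen_span"
    and "j < length vs \<Longrightarrow> k < length vs \<Longrightarrow>
      tripled \<alpha> \<beta> (\<lambda>i. res3 (vs ! j) i * res3 (vs ! k) i * res3 b i) \<in> gen_span"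
    and "j < length vs \<Longrightarrow> tripled \<alpha> \<beta> (\<lambda>i. res3 (vs ! j) i * res3 b i * res3 b i) \<in> gen_span"
  using assms by (simp_all add: span_invariant_def)

lemma tripled_carry3_row_in_gen_span:
  assumes m: "m < length vs" and b: "span_invariant b"
  shows "tripled \<alpha> \<beta> (\<lambda>i. carry3 (res3 (vs ! m) i) (res3 b i)) \<in> gen_span"
proof -
  let ?v = "vs ! m"
  have "tripled \<alpha> \<beta> (\<lambda>i. res3 ?v i * res3 b i + 1 * (res3 ?v i * res3 ?v i * res3 b i)) \<in> gen_span"
    by (rule tripled_in_subspace3[OF subspace3_gen_span span_invariantD(3)[OF b m]
          span_invariantD(4)[OF b m m], where c = 1]) simp
  then show ?thesis
    by (rule tripled_in_subspace3[OF subspace3_gen_span _ span_invariantD(5)[OF b m], where c = 1])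
      (simp add: carry3_def)
qed

lemma Phi_add_row_in_gen_span:
  assumes m: "m < length vs" and b: "span_invariant b"
  shows "Phi (cw_add (vs ! m) b) \<in> gen_span"
proof -
  let ?v = "vs ! m" and ?carry = "tripled \<alpha> \<beta> (\<lambda>i. carry3 (res3 (vs ! m) i) (res3 b i))"
  have vs: "?v \<in> space \<alpha> \<beta>" and bs: "b \<in> space \<alpha> \<beta>"
    using row_in_space[OF m] span_invariantD(1)[OF b] .
  have "add3 (Phi ?v) (Phi b) = add3 ?carry (Phi (cw_add ?v b))"
    using Phi_add[OF vs bs] add3_commute by metis
  then have "Phi (cw_add ?v b) = add3 (add3 (Phi ?v) (Phi b)) (smul3 2 ?carry)"
    using Phi_in_vec3[OF cw_add_in_space[OF vs bs]] tripled_in_vec3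
    by (intro add3_eq_imp_eq_sub) (auto simp: length_vec3)
  moreover have "Phi ?v \<in> gen_span" using m Phi_in_gen_span by (simp add: span_generators_def)
  ultimately show ?thesis
    using span_invariantD(2)[OF b] tripled_carry3_row_in_gen_span[OF m b] subspace3_gen_span
    by (simp add: subspace3_add subspace3_smul)
qed

lemma span_invariant_add_order9:
  assumes m: "m < length vs" and b: "span_invariant b"
  shows "span_invariant (cw_add (vs ! m) b)"
proof -
  let ?v = "vs ! m" and ?vb = "cw_add (vs ! m) b"
  have vs: "?v \<in> space \<alpha> \<beta>" and bs: "b \<in> space \<alpha> \<beta>"
    using row_in_space[OF m] span_invariantD(1)[OF b] .
  have res: "res3 ?vb i = (res3 ?v i + res3 b i) mod 3" if "i < \<beta>" for i
    using res3_cw_add[OF vs bs that] .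
  have "tripled \<alpha> \<beta> (\<lambda>i. res3 (vs ! j) i * res3 ?vb i) \<in> gen_span" if j: "j < length vs" for j
    by (rule tripled_in_subspace3[OF subspace3_gen_span tripled_prod_in_gen_span[OF j m]
          span_invariantD(3)[OF b j], where c = 1])
      (simp only: res mod_mult_right_eq, simp add: algebra_simps)
  moreover have "tripled \<alpha> \<beta> (\<lambda>i. res3 (vs ! j) i * res3 (vs ! k) i * res3 ?vb i) \<in> gen_span"
    if j: "j < length vs" and k: "k < length vs" for j k
    by (rule tripled_in_subspace3[OF subspace3_gen_span tripled_prod3_in_gen_span[OF j k m]
          span_invariantD(4)[OF b j k], where c = 1])
      (simp only: res mod_mult_right_eq, simp add: algebra_simps)
  moreover have "tripled \<alpha> \<beta> (\<lambda>i. res3 (vs ! j) i * res3 ?vb i * res3 ?vb i) \<in> gen_span"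
    if j: "j < length vs" for j
  proof -
    have square: "(a * ((c + d) mod 3) * ((c + d) mod 3)) mod 3 =
        (a * c * c + 1 * (a * d * d) + 2 * (a * c * d)) mod 3"
      if "a \<in> {0, 1, 2}" "c \<in> {0, 1, 2}" "d \<in> {0, 1, 2}" for a c d :: int
      using that by auto
    have "tripled \<alpha> \<beta> (\<lambda>i. res3 (vs ! j) i * res3 ?v i * res3 ?v i + 1 * (res3 (vs ! j) i * res3 b i * res3 b i))
        \<in> gen_span"
      by (rule tripled_in_subspace3[OF subspace3_gen_span tripled_prod3_in_gen_span[OF j m m]
            span_invariantD(5)[OF b j], where c = 1]) simp
    then show ?thesis
      by (rule tripled_in_subspace3[OF subspace3_gen_span _ span_invariantD(4)[OF b j m], where c = 2])
        (simp only: res square[OF res3_in res3_in res3_in])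
  qed
  ultimately show ?thesis
    using cw_add_in_space[OF vs bs] Phi_add_row_in_gen_span[OF m b] by (simp add: span_invariant_def)
qed

lemma gray_span_eq_gen_span: "gray_span \<alpha> \<beta> C = gen_span"
proof
  have "C \<subseteq> {b. span_invariant b}"
  proof (rule gen_matrix_induct[OF C gm])
    fix w b assume w: "w \<in> set us \<union> set vs" and b: "b \<in> {b. span_invariant b}"
    show "cw_add w b \<in> {b. span_invariant b}"
    proof (cases "w \<in> set us")
      case True
      then show ?thesis using span_invariant_add_order3 b by simp
    next
      case False
      then obtain m where "m < length vs" "w = vs ! m" using w by (auto simp: in_set_conv_nth)
      then show ?thesis using span_invariant_add_order9 b by simp
    qed
  qed (auto simp: span_invariant_zero dest: span_invariantD(1))
  then have "Phi ` C \<subseteq> gen_span" by (auto simp: span_invariant_def)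
  then show "gray_span \<alpha> \<beta> C \<subseteq> gen_span" by (rule span3_least[OF _ subspace3_gen_span])
qed (rule gen_span_subset)

end

section \<open>The span is the Gray image of an additive code\<close>

context
  fixes \<alpha> \<beta> :: nat and C :: "(int list \<times> int list) set"
  assumes C: "additive_code \<alpha> \<beta> C"
begin

text \<open>The Gray map is additive on \<open>span_corrections\<close>, and adding \<open>span_corrections\<close> to \<open>C\<close>
  fills the span.\<close>

definition span_corrections :: "(int list \<times> int list) set" where
  "span_corrections = {t \<in> space \<alpha> \<beta>. fst t = replicate \<alpha> 0 \<and> (\<forall>i<\<beta>. res3 t i = 0) \<and>
     Phi t \<in> gray_span \<alpha> \<beta> C}"

definition span_code :: "(int list \<times> int list) set" where
  "span_code = {cw_add c t | c t. c \<in> C \<and> t \<in> span_corrections}"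

lemma span_corrections_subset_space: "span_corrections \<subseteq> space \<alpha> \<beta>"
  by (auto simp: span_corrections_def)

lemma zero_in_span_corrections: "zero_cw \<alpha> \<beta> \<in> span_corrections"
  using subspace3_zero[OF subspace3_gray_span_code[OF C]]
  by (simp add: span_corrections_def zero_cw_in_space Phi_zero_cw res3_zero_cw)

lemma span_corrections_add:
  assumes t1: "t1 \<in> span_corrections" and t2: "t2 \<in> span_corrections"
  shows "cw_add t1 t2 \<in> span_corrections"
proof -
  have sp: "t1 \<in> space \<alpha> \<beta>" "t2 \<in> space \<alpha> \<beta>" using t1 t2 span_corrections_subset_space by auto
  have res: "\<forall>i<\<beta>. res3 t1 i = 0" "\<forall>i<\<beta>. res3 t2 i = 0" using t1 t2 by (auto simp: span_corrections_def)
  have "Phi (cw_add t1 t2) = add3 (Phi t1) (Phi t2)" using Phi_add_res3_zero[OF sp res(2)] .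
  then have "Phi (cw_add t1 t2) \<in> gray_span \<alpha> \<beta> C"
    using t1 t2 subspace3_add[OF subspace3_gray_span_code[OF C]] by (simp add: span_corrections_def)
  moreover have "fst (cw_add t1 t2) = replicate \<alpha> 0"
    using t1 t2 by (simp add: span_corrections_def fst_cw_add add3_zero_right zero_in_vec3)
  ultimately show ?thesis
    using cw_add_in_space[OF sp] res res3_cw_add[OF sp] by (simp add: span_corrections_def)
qed

lemma times3_cw_in_span_corrections:
  "tripled \<alpha> \<beta> h \<in> gray_span \<alpha> \<beta> C \<Longrightarrow> times3_cw \<alpha> \<beta> h \<in> span_corrections"
  by (simp add: span_corrections_def times3_cw_in_space res3_times3_cw Phi_times3_cw)
    (simp add: times3_cw_def)

lemma span_code_subset_space: "span_code \<subseteq> space \<alpha> \<beta>"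
  unfolding span_code_def
  using code_subset_space[OF C] span_corrections_subset_space cw_add_in_space by blast

lemma span_corrections_subset_span_code: "span_corrections \<subseteq> span_code"
proof
  fix t assume t: "t \<in> span_corrections"
  then have "t = cw_add (zero_cw \<alpha> \<beta>) t"
    using span_corrections_subset_space by (simp add: cw_add_zero_left subsetD)
  then show "t \<in> span_code" unfolding span_code_def using additive_code_zero[OF C] t by blast
qed

lemma code_subset_span_code: "C \<subseteq> span_code"
proof
  fix c assume c: "c \<in> C"
  then have "c = cw_add c (zero_cw \<alpha> \<beta>)"
    using code_subset_space[OF C] by (simp add: cw_add_zero_right subsetD)
  then show "c \<in> span_code" unfolding span_code_def using zero_in_span_corrections c by blast
qed

lemma additive_code_span_code: "additive_code \<alpha> \<beta> span_code"
  unfolding additive_code_def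
proof (intro conjI ballI)
  show "0 < \<alpha> + \<beta>" using C by (simp add: additive_code_def)
  show "span_code \<subseteq> space \<alpha> \<beta>" by (rule span_code_subset_space)
  show "zero_cw \<alpha> \<beta> \<in> span_code" using code_subset_span_code additive_code_zero[OF C] by blast
  fix a b assume "a \<in> span_code" "b \<in> span_code"
  then obtain c1 t1 c2 t2 where ct: "a = cw_add c1 t1" "b = cw_add c2 t2"
    and in_C: "c1 \<in> C" "c2 \<in> C" and in_T: "t1 \<in> span_corrections" "t2 \<in> span_corrections"
    unfolding span_code_def by blast
  have "c1 \<in> space \<alpha> \<beta>" "c2 \<in> space \<alpha> \<beta>" "t1 \<in> space \<alpha> \<beta>" "t2 \<in> space \<alpha> \<beta>"
    using in_C in_T code_subset_space[OF C] span_corrections_subset_space by auto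
  then have "cw_add a b = cw_add (cw_add c1 c2) (cw_add t1 t2)"
    using ct by (simp add: cw_add_cw_add_swap)
  then show "cw_add a b \<in> span_code"
    unfolding span_code_def using additive_code_add[OF C in_C] span_corrections_add[OF in_T] by blast
qed

lemma res3_span_code:
  assumes "d \<in> span_code"
  obtains c where "c \<in> C" "\<forall>i<\<beta>. res3 d i = res3 c i"
proof -
  obtain c t where ct: "d = cw_add c t" "c \<in> C" "t \<in> span_corrections"
    using assms unfolding span_code_def by blast
  then have "res3 d i = res3 c i" if "i < \<beta>" for i
    using that code_subset_space[OF C] span_corrections_subset_space res3_cw_add[of c \<alpha> \<beta> t i]
    by (auto simp: span_corrections_def res3_def)
  then show ?thesis using that ct(2) by blast
qed

lemma Phi_span_code_subset: "Phi ` span_code \<subseteq> gray_span \<alpha> \<beta> C"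
proof
  fix y assume "y \<in> Phi ` span_code"
  then obtain c t where ct: "y = Phi (cw_add c t)" "c \<in> C" "t \<in> span_corrections"
    unfolding span_code_def by blast
  moreover have "c \<in> space \<alpha> \<beta>" "t \<in> space \<alpha> \<beta>"
    using ct code_subset_space[OF C] span_corrections_subset_space by auto
  ultimately have "y = add3 (Phi c) (Phi t)"
    by (simp add: Phi_add_res3_zero span_corrections_def)
  then show "y \<in> gray_span \<alpha> \<beta> C"
    using ct Phi_in_gray_span[OF code_subset_space[OF C]] subspace3_add[OF subspace3_gray_span_code[OF C]]
    by (auto simp: span_corrections_def)
qed

text \<open>The carry of two elements of \<open>span_code\<close> is the Gray image of an element of \<open>span_corrections\<close>,
  so the image is closed under addition.\<close>

lemma subspace3_Phi_span_code: "subspace3 (\<alpha> + 3 * \<beta>) (Phi ` span_code)"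
  unfolding subspace3_def
proof (intro conjI ballI)
  show "Phi ` span_code \<subseteq> vec3 (\<alpha> + 3 * \<beta>)" using span_code_subset_space Phi_in_vec3 by blast
  show "replicate (\<alpha> + 3 * \<beta>) 0 \<in> Phi ` span_code"
    using additive_code_zero[OF additive_code_span_code] Phi_zero_cw by (metis image_eqI)
  fix x y assume "x \<in> Phi ` span_code" "y \<in> Phi ` span_code"
  then obtain a b where ab: "a \<in> span_code" "b \<in> span_code" "x = Phi a" "y = Phi b" by blast
  obtain c1 c2 where c: "c1 \<in> C" "c2 \<in> C" "\<forall>i<\<beta>. res3 a i = res3 c1 i" "\<forall>i<\<beta>. res3 b i = res3 c2 i"
    using res3_span_code ab(1,2) by metis
  let ?carry = "\<lambda>i. carry3 (res3 a i) (res3 b i)"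
  have sp: "a \<in> space \<alpha> \<beta>" "b \<in> space \<alpha> \<beta>" using ab span_code_subset_space by auto
  have "tripled \<alpha> \<beta> ?carry = tripled \<alpha> \<beta> (\<lambda>i. carry3 (res3 c1 i) (res3 c2 i))"
    using c by (intro tripled_cong) simp
  then have K: "times3_cw \<alpha> \<beta> ?carry \<in> span_code"
    using tripled_carry3_in_gray_span[OF C c(1,2)] times3_cw_in_span_corrections span_corrections_subset_span_code
    by auto
  have "add3 x y = Phi (cw_add (cw_add a b) (times3_cw \<alpha> \<beta> ?carry))"
    using Phi_add[OF sp] ab Phi_times3_cw res3_times3_cw
      Phi_add_res3_zero[OF cw_add_in_space[OF sp] times3_cw_in_space]
    by simp
  moreover have "cw_add (cw_add a b) (times3_cw \<alpha> \<beta> ?carry) \<in> span_code"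
    using ab K additive_code_add[OF additive_code_span_code] by blast
  ultimately show "add3 x y \<in> Phi ` span_code" by blast
qed

lemma Phi_span_code: "Phi ` span_code = gray_span \<alpha> \<beta> C"
proof
  show "gray_span \<alpha> \<beta> C \<subseteq> Phi ` span_code"
    using code_subset_span_code by (intro span3_least[OF _ subspace3_Phi_span_code]) auto
qed (rule Phi_span_code_subset)

end

section \<open>Bounds on the rank\<close>

lemma card_le_card_image_mult:
  assumes "finite A" "finite K"
    and fibres: "\<And>a. a \<in> A \<Longrightarrow> \<exists>g. inj_on g {x \<in> A. f x = f a} \<and> g ` {x \<in> A. f x = f a} \<subseteq> K"
  shows "card A \<le> card (f ` A) * card K"
proof -
  have "A = (\<Union>y\<in>f ` A. {x \<in> A. f x = y})" by blast
  then have "card A \<le> (\<Sum>y\<in>f ` A. card {x \<in> A. f x = y})"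
    by (metis assms(1) card_UN_le finite_imageI)
  also have "\<dots> \<le> (\<Sum>y\<in>f ` A. card K)"
  proof (rule sum_mono)
    fix y assume "y \<in> f ` A"
    then obtain a where a: "a \<in> A" "y = f a" by blast
    then obtain g where "inj_on g {x \<in> A. f x = f a}" "g ` {x \<in> A. f x = f a} \<subseteq> K"
      using fibres by blast
    then show "card {x \<in> A. f x = y} \<le> card K"
      using a card_image card_mono[OF assms(2)] by metis
  qed
  finally show ?thesis by simp
qed

definition red3 :: "int list \<times> int list \<Rightarrow> int list" where
  "red3 a = map (\<lambda>s. s mod 3) (snd a)"

lemma red3_in_vec3: "a \<in> space \<alpha> \<beta> \<Longrightarrow> red3 a \<in> vec3 \<beta>"
  by (simp add: red3_def vec3_iff length_snd_space)

lemma red3_eq_iff: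
  "a \<in> space \<alpha> \<beta> \<Longrightarrow> b \<in> space \<alpha> \<beta> \<Longrightarrow> red3 a = red3 b \<longleftrightarrow> (\<forall>i<\<beta>. res3 a i = res3 b i)"
  by (simp add: red3_def res3_def list_eq_iff_nth_eq length_snd_space)

lemma red3_cw_add:
  "a \<in> space \<alpha> \<beta> \<Longrightarrow> b \<in> space \<alpha> \<beta> \<Longrightarrow> red3 (cw_add a b) = add3 (red3 a) (red3 b)"
  by (simp add: red3_def list_eq_iff_nth_eq length_snd_space mod_mod_cancel mod_simps)

lemma red3_zero_cw: "red3 (zero_cw \<alpha> \<beta>) = replicate \<beta> 0"
  by (simp add: red3_def)

lemma red3_code_subset:
  assumes C: "additive_code \<alpha> \<beta> C" and gm: "is_gen_matrix \<alpha> \<beta> C us vs"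
  shows "red3 ` C \<subseteq> list_span3 \<beta> (map red3 vs)"
proof -
  let ?S = "list_span3 \<beta> (map red3 vs)"
  have gens: "set us \<union> set vs \<subseteq> space \<alpha> \<beta>"
    using gm code_subset_space[OF C] by (auto simp: is_gen_matrix_def)
  then have "set (map red3 vs) \<subseteq> vec3 \<beta>" using red3_in_vec3 by auto
  then have S: "subspace3 \<beta> ?S" "red3 ` set vs \<subseteq> ?S"
    using subspace3_list_span3 set_subset_list_span3[of "map red3 vs"] by simp_all
  have "C \<subseteq> {b \<in> space \<alpha> \<beta>. red3 b \<in> ?S}"
  proof (rule gen_matrix_induct[OF C gm])
    fix w b assume w: "w \<in> set us \<union> set vs" and b: "b \<in> {b \<in> space \<alpha> \<beta>. red3 b \<in> ?S}"
    have ws: "w \<in> space \<alpha> \<beta>" using w gens by blast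
    have "red3 w \<in> ?S"
    proof (cases "w \<in> set us")
      case True
      then have "cw_smul 3 w = zero_cw \<alpha> \<beta>" using gm by (simp add: is_gen_matrix_def order3_def)
      then have "red3 w = red3 (zero_cw \<alpha> \<beta>)"
        using ws cw_smul_3_eq_zero_iff[OF ws] by (simp add: red3_eq_iff zero_cw_in_space res3_zero_cw)
      then show ?thesis using subspace3_zero[OF S(1)] by (simp add: red3_zero_cw)
    qed (use w S in auto)
    then show "cw_add w b \<in> {b \<in> space \<alpha> \<beta>. red3 b \<in> ?S}"
      using b ws subspace3_add[OF S(1)] by (simp add: red3_cw_add cw_add_in_space)
  qed (simp_all add: zero_cw_in_space red3_zero_cw subspace3_zero[OF S(1)] subset_iff)
  then show ?thesis by blast
qed

lemma subspace3_fst_sub3: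
  assumes C: "additive_code \<alpha> \<beta> C"
  shows "subspace3 \<alpha> (fst ` sub3 \<alpha> \<beta> C)"
  unfolding subspace3_def
proof (intro conjI ballI)
  show "fst ` sub3 \<alpha> \<beta> C \<subseteq> vec3 \<alpha>"
    using fst_in_vec3 code_subset_space[OF C] by (auto simp: sub3_def)
  have "cw_smul 3 (zero_cw \<alpha> \<beta>) = zero_cw \<alpha> \<beta>"
    by (simp add: cw_smul_3_eq_zero_iff zero_cw_in_space res3_zero_cw)
  then have "zero_cw \<alpha> \<beta> \<in> sub3 \<alpha> \<beta> C" using additive_code_zero[OF C] by (simp add: sub3_def)
  then show "replicate \<alpha> 0 \<in> fst ` sub3 \<alpha> \<beta> C" by (rule rev_image_eqI) simp
  fix x y assume "x \<in> fst ` sub3 \<alpha> \<beta> C" "y \<in> fst ` sub3 \<alpha> \<beta> C"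
  then obtain a b where ab: "a \<in> sub3 \<alpha> \<beta> C" "b \<in> sub3 \<alpha> \<beta> C" "x = fst a" "y = fst b" by blast
  then have sp: "a \<in> space \<alpha> \<beta>" "b \<in> space \<alpha> \<beta>" and in_C: "a \<in> C" "b \<in> C"
    using code_subset_space[OF C] by (auto simp: sub3_def)
  have "cw_smul 3 (cw_add a b) = cw_add (zero_cw \<alpha> \<beta>) (zero_cw \<alpha> \<beta>)"
    using cw_smul_add[OF sp] ab by (simp add: sub3_def)
  then have "cw_add a b \<in> sub3 \<alpha> \<beta> C"
    using additive_code_add[OF C in_C] by (simp add: sub3_def cw_add_zero_right zero_cw_in_space)
  then show "add3 x y \<in> fst ` sub3 \<alpha> \<beta> C" by (rule rev_image_eqI) (simp add: fst_cw_add ab)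
qed

lemma span_code_red3_zero:
  assumes C: "additive_code \<alpha> \<beta> C" and e: "e \<in> span_code \<alpha> \<beta> C" and red: "red3 e = replicate \<beta> 0"
  shows "e \<in> fst ` sub3 \<alpha> \<beta> C \<times> {y. set y \<subseteq> {0, 3, 6} \<and> length y = \<beta>}"
proof -
  obtain c t where ct: "e = cw_add c t" "c \<in> C" "t \<in> span_corrections \<alpha> \<beta> C"
    using e unfolding span_code_def[OF C] by blast
  have cs: "c \<in> space \<alpha> \<beta>" and ts: "t \<in> space \<alpha> \<beta>" and es: "e \<in> space \<alpha> \<beta>"
    using ct e code_subset_space[OF C] span_corrections_subset_space[OF C] span_code_subset_space[OF C] by auto
  have t0: "fst t = replicate \<alpha> 0" "\<forall>i<\<beta>. res3 t i = 0"
    using ct(3) by (simp_all add: span_corrections_def[OF C])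
  have e0: "\<forall>i<\<beta>. res3 e i = 0"
    using red red3_eq_iff[OF es zero_cw_in_space] by (simp add: red3_zero_cw res3_zero_cw)
  then have "\<forall>i<\<beta>. res3 c i = 0"
    using ct(1) t0(2) res3_cw_add[OF cs ts] by (auto simp: res3_def)
  then have "c \<in> sub3 \<alpha> \<beta> C" using ct(2) cw_smul_3_eq_zero_iff[OF cs] by (simp add: sub3_def)
  moreover have "fst e = fst c"
    using ct(1) t0(1) add3_zero_right[OF fst_in_vec3[OF cs]] by (simp add: fst_cw_add)
  moreover have "x \<in> {0, 3, 6}" if x: "x \<in> set (snd e)" for x
  proof -
    obtain i where "i < length (snd e)" "x = snd e ! i" using x by (auto simp: in_set_conv_nth)
    then have i: "i < \<beta>" "x = snd e ! i" using length_snd_space[OF es] by auto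
    then have "0 \<le> x" "x \<le> 8" "x mod 3 = 0" using nth_snd_space[OF es] e0 by (auto simp: res3_def)
    then show ?thesis by auto
  qed
  ultimately show ?thesis using length_snd_space[OF es] by (cases e) force
qed

lemma card_red3_span_code:
  assumes C: "additive_code \<alpha> \<beta> C" and gm: "is_gen_matrix \<alpha> \<beta> C us vs"
  shows "card (red3 ` span_code \<alpha> \<beta> C) \<le> 3 ^ length vs"
proof -
  have "red3 ` span_code \<alpha> \<beta> C \<subseteq> red3 ` C"
  proof
    fix y assume "y \<in> red3 ` span_code \<alpha> \<beta> C"
    then obtain d where d: "d \<in> span_code \<alpha> \<beta> C" "y = red3 d" by blast
    then obtain c where "c \<in> C" "\<forall>i<\<beta>. res3 d i = res3 c i" using res3_span_code[OF C] by blast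
    then show "y \<in> red3 ` C"
      using d red3_eq_iff span_code_subset_space[OF C] code_subset_space[OF C] by blast
  qed
  also have "\<dots> \<subseteq> list_span3 \<beta> (map red3 vs)" using red3_code_subset[OF C gm] .
  finally have sub: "red3 ` span_code \<alpha> \<beta> C \<subseteq> list_span3 \<beta> (map red3 vs)" .
  have "set (map red3 vs) \<subseteq> vec3 \<beta>"
    using red3_in_vec3 rows_in_code(2)[OF C gm] code_subset_space[OF C] by fastforce
  then have "card (red3 ` span_code \<alpha> \<beta> C) \<le> card (list_span3 \<beta> (map red3 vs))"
    using card_mono[OF subspace3_finite[OF subspace3_list_span3] sub] by blast
  also have "\<dots> \<le> 3 ^ length vs" using card_list_span3_le[of \<beta> "map red3 vs"] by simp
  finally show ?thesis .
qed

lemma card_span_code: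
  assumes C: "additive_code \<alpha> \<beta> C" and gm: "is_gen_matrix \<alpha> \<beta> C us vs"
  shows "card (span_code \<alpha> \<beta> C) \<le> 3 ^ length vs * (3 ^ dim3 \<alpha> (fst ` sub3 \<alpha> \<beta> C) * 3 ^ \<beta>)"
proof -
  let ?D = "span_code \<alpha> \<beta> C"
  let ?K = "fst ` sub3 \<alpha> \<beta> C \<times> {y. set y \<subseteq> {0, 3, 6::int} \<and> length y = \<beta>}"
  have D: "additive_code \<alpha> \<beta> ?D" using additive_code_span_code[OF C] .
  have card_K: "card ?K = 3 ^ dim3 \<alpha> (fst ` sub3 \<alpha> \<beta> C) * 3 ^ \<beta>"
    using card_subspace3[OF subspace3_fst_sub3[OF C]]
    by (simp add: card_cartesian_product card_lists_length_eq numeral_3_eq_3)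
  have "card ?D \<le> card (red3 ` ?D) * card ?K"
  proof (rule card_le_card_image_mult)
    show "finite ?D" using finite_subset[OF span_code_subset_space[OF C] finite_space] .
    show "finite ?K"
      using subspace3_finite[OF subspace3_fst_sub3[OF C]] by (simp add: finite_lists_length_eq)
    fix a assume a: "a \<in> ?D"
    then have as: "a \<in> space \<alpha> \<beta>" using span_code_subset_space[OF C] by blast
    then have ns: "cw_neg a \<in> space \<alpha> \<beta>" by (rule cw_neg_in_space)
    have "inj_on (\<lambda>d. cw_add d (cw_neg a)) {x \<in> ?D. red3 x = red3 a}"
    proof (rule inj_onI)
      fix x y assume "x \<in> {x \<in> ?D. red3 x = red3 a}" "y \<in> {x \<in> ?D. red3 x = red3 a}"
        and "cw_add x (cw_neg a) = cw_add y (cw_neg a)"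
      then show "x = y" using cw_add_right_cancel[OF _ _ ns] span_code_subset_space[OF C] by blast
    qed
    moreover have "cw_add d (cw_neg a) \<in> ?K" if d: "d \<in> ?D" "red3 d = red3 a" for d
    proof -
      have "d \<in> space \<alpha> \<beta>" using d span_code_subset_space[OF C] by blast
      then have "red3 (cw_add d (cw_neg a)) = red3 (cw_add a (cw_neg a))"
        using d as ns by (simp add: red3_cw_add)
      then have "red3 (cw_add d (cw_neg a)) = replicate \<beta> 0"
        using cw_add_neg[OF as] by (simp add: red3_zero_cw)
      then show ?thesis
        using additive_code_add[OF D d(1) additive_code_neg[OF D a]] span_code_red3_zero[OF C] by blast
    qed
    ultimately show "\<exists>g. inj_on g {x \<in> ?D. red3 x = red3 a} \<and> g ` {x \<in> ?D. red3 x = red3 a} \<subseteq> ?K"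
      by blast
  qed
  then show ?thesis
    using card_K card_red3_span_code[OF C gm] by (metis le_trans mult_le_mono1)
qed

lemma finite_decreasing_pairs: "finite {(k, l). l \<le> k \<and> k < (n::nat)}"
  by (rule finite_subset[of _ "{..<n} \<times> {..<n}"]) auto

lemma finite_increasing_triples: "finite {(x, y, z). x \<le> y \<and> y \<le> z \<and> z < (n::nat)}"
  by (rule finite_subset[of _ "{..<n} \<times> {..<n} \<times> {..<n}"]) auto

lemma card_decreasing_pairs: "card {(k, l). l \<le> k \<and> k < n} = (n + 1) choose 2"
proof (induction n)
  case (Suc n)
  let ?A = "{(k, l). l \<le> k \<and> k < n}" and ?B = "(\<lambda>l. (n, l)) ` {..n}"
  have "{(k, l). l \<le> k \<and> k < Suc n} = ?A \<union> ?B" by auto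
  moreover have "card (?A \<union> ?B) = card ?A + card ?B"
    by (rule card_Un_disjoint) (auto simp: finite_decreasing_pairs)
  moreover have "card ?B = Suc n" by (simp add: card_image inj_on_def)
  ultimately show ?case using Suc by (simp add: numeral_2_eq_2)
qed simp

lemma card_increasing_triples: "card {(x, y, z). x \<le> y \<and> y \<le> z \<and> z < n} = (n + 2) choose 3"
proof (induction n)
  case (Suc n)
  let ?A = "{(x, y, z). x \<le> y \<and> y \<le> z \<and> z < n}"
    and ?B = "(\<lambda>(k, l). (l, k, n)) ` {(k, l). l \<le> k \<and> k < Suc n}"
  have "{(x, y, z). x \<le> y \<and> y \<le> z \<and> z < Suc n} = ?A \<union> ?B" by (auto simp: image_iff)
  moreover have "card (?A \<union> ?B) = card ?A + card ?B"
    by (rule card_Un_disjoint) (auto simp: finite_increasing_triples finite_decreasing_pairs)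
  moreover have "card ?B = (n + 2) choose 2"
    by (subst card_image) (auto simp: inj_on_def card_decreasing_pairs)
  ultimately show ?case
    using Suc binomial_Suc_Suc[of "n + 2" 2] by (simp add: numeral_3_eq_3 numeral_2_eq_2)
qed simp

lemma card_span_generators:
  "card (span_generators us vs) \<le> length us + length vs + (length vs + 1 choose 2) + (length vs + 2 choose 3)"
  and finite_span_generators: "finite (span_generators us vs)"
proof -
  let ?P2 = "{cw_smul 3 (cw_mult (vs ! k) (vs ! l)) | k l. l \<le> k \<and> k < length vs}"
  let ?P3 = "{cw_smul 3 (cw_mult (vs ! x) (cw_mult (vs ! y) (vs ! z))) | x y z. x \<le> y \<and> y \<le> z \<and> z < length vs}"
  have P2: "?P2 = (\<lambda>(k, l). cw_smul 3 (cw_mult (vs ! k) (vs ! l))) ` {(k, l). l \<le> k \<and> k < length vs}"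
    by auto
  have P3: "?P3 = (\<lambda>(x, y, z). cw_smul 3 (cw_mult (vs ! x) (cw_mult (vs ! y) (vs ! z)))) `
      {(x, y, z). x \<le> y \<and> y \<le> z \<and> z < length vs}"
    by (auto intro!: image_eqI[where x = "(x, y, z)" for x y z])
  note fin = finite_decreasing_pairs[of "length vs"] finite_increasing_triples[of "length vs"]
  show "finite (span_generators us vs)" unfolding span_generators_def P2 P3 using fin by simp
  have "card ?P2 \<le> (length vs + 1 choose 2)" "card ?P3 \<le> (length vs + 2 choose 3)"
    unfolding P2 P3 using card_image_le[OF fin(1)] card_image_le[OF fin(2)]
      card_decreasing_pairs card_increasing_triples by metis+
  then show "card (span_generators us vs) \<le> length us + length vs + (length vs + 1 choose 2) + (length vs + 2 choose 3)"
    unfolding span_generators_def using card_length[of us] card_length[of vs]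
      card_Un_le[of "set us \<union> set vs \<union> ?P2" ?P3] card_Un_le[of "set us \<union> set vs" ?P2] card_Un_le[of "set us" "set vs"]
    by linarith
qed

context
  fixes \<alpha> \<beta> :: nat and C :: "(int list \<times> int list) set" and us vs :: "(int list \<times> int list) list"
  assumes C: "additive_code \<alpha> \<beta> C" and gm: "is_gen_matrix \<alpha> \<beta> C us vs"
begin

lemma card_gray_span: "card (gray_span \<alpha> \<beta> C) = 3 ^ rank3 \<alpha> \<beta> C"
  using card_subspace3[OF subspace3_gray_span_code[OF C]] by (simp add: rank3_def)

lemma rank3_lower_bound: "length us + 2 * length vs \<le> rank3 \<alpha> \<beta> C"
proof -
  have "(3::nat) ^ (length us + 2 * length vs) = card (Phi ` C)"
    using card_image[OF inj_on_subset[OF inj_on_Phi code_subset_space[OF C]]] card_gen_matrix_code[OF gm]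
    by simp
  also have "\<dots> \<le> card (gray_span \<alpha> \<beta> C)"
    using Phi_in_gray_span[OF code_subset_space[OF C]]
    by (intro card_mono subspace3_finite[OF subspace3_gray_span_code[OF C]]) blast
  finally show ?thesis by (simp add: card_gray_span)
qed

lemma rank3_le_kernel: "rank3 \<alpha> \<beta> C \<le> \<beta> + length vs + dim3 \<alpha> (fst ` sub3 \<alpha> \<beta> C)"
proof -
  have "card (gray_span \<alpha> \<beta> C) = card (span_code \<alpha> \<beta> C)"
    using Phi_span_code[OF C] card_image[OF inj_on_subset[OF inj_on_Phi span_code_subset_space[OF C]]]
    by simp
  also have "\<dots> \<le> 3 ^ (\<beta> + length vs + dim3 \<alpha> (fst ` sub3 \<alpha> \<beta> C))"
    using card_span_code[OF C gm] by (simp add: power_add mult_ac)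
  finally show ?thesis by (simp add: card_gray_span)
qed

lemma rank3_le_generators:
  "rank3 \<alpha> \<beta> C \<le> length us + length vs + (length vs + 1 choose 2) + (length vs + 2 choose 3)"
proof -
  obtain xs where xs: "set xs = Phi ` span_generators us vs" "distinct xs"
    using finite_distinct_list[OF finite_imageI[of "span_generators us vs" Phi, OF finite_span_generators]]
    by blast
  have "rank3 \<alpha> \<beta> C \<le> length xs"
    unfolding rank3_def
  proof (rule dim3_le_length[OF subspace3_gray_span_code[OF C]])
    show "set xs \<subseteq> vec3 (\<alpha> + 3 * \<beta>)"
      unfolding xs(1) using span_generators_subset_space[OF C gm] Phi_in_vec3 by blast
    show "gray_span \<alpha> \<beta> C \<subseteq> span3 (\<alpha> + 3 * \<beta>) (set xs)"
      unfolding xs(1) gray_span_eq_gen_span[OF C gm] ..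
  qed
  also have "length xs = card (Phi ` span_generators us vs)"
    using distinct_card[OF xs(2)] xs(1) by simp
  also have "\<dots> \<le> card (span_generators us vs)"
    using card_image_le[OF finite_span_generators[of us vs]] .
  also have "\<dots> \<le> length us + length vs + (length vs + 1 choose 2) + (length vs + 2 choose 3)"
    by (rule card_span_generators)
  finally show ?thesis .
qed

end

theorem theorem5:
  fixes \<alpha> \<beta> \<gamma> \<delta> \<kappa> :: nat and C :: "(int list \<times> int list) set"
  assumes "code_type \<alpha> \<beta> \<gamma> \<delta> \<kappa> C"
  shows "(\<forall>us vs. is_gen_matrix \<alpha> \<beta> C us vs \<longrightarrow>
            span3 (\<alpha> + 3 * \<beta>) (Phi ` C) =
            span3 (\<alpha> + 3 * \<beta>) (Phi ` (set us \<union> set vs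
              \<union> {cw_smul 3 (cw_mult (vs ! k) (vs ! l)) | k l. l \<le> k \<and> k < length vs}
              \<union> {cw_smul 3 (cw_mult (vs ! x) (cw_mult (vs ! y) (vs ! z))) | x y z.
                   x \<le> y \<and> y \<le> z \<and> z < length vs})))
       \<and> (\<gamma> + 2 * \<delta> \<le> rank3 \<alpha> \<beta> C \<and>
          rank3 \<alpha> \<beta> C \<le> min (\<beta> + \<delta> + \<kappa>) (\<gamma> + \<delta> + ((\<delta> + 1) choose 2) + ((\<delta> + 2) choose 3)))
       \<and> (\<exists>D. additive_code \<alpha> \<beta> D \<and> span3 (\<alpha> + 3 * \<beta>) (Phi ` C) = Phi ` D)"
proof -
  have C: "additive_code \<alpha> \<beta> C" and \<kappa>: "\<kappa> = dim3 \<alpha> (fst ` sub3 \<alpha> \<beta> C)"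
    using assms by (simp_all add: code_type_def)
  obtain us vs where gm: "is_gen_matrix \<alpha> \<beta> C us vs" and "length us = \<gamma>" "length vs = \<delta>"
    using assms by (auto simp: code_type_def)
  then have "\<gamma> + 2 * \<delta> \<le> rank3 \<alpha> \<beta> C \<and>
      rank3 \<alpha> \<beta> C \<le> min (\<beta> + \<delta> + \<kappa>) (\<gamma> + \<delta> + ((\<delta> + 1) choose 2) + ((\<delta> + 2) choose 3))"
    using rank3_lower_bound[OF C gm] rank3_le_kernel[OF C gm] rank3_le_generators[OF C gm] \<kappa> by simp
  moreover have "\<forall>us vs. is_gen_matrix \<alpha> \<beta> C us vs \<longrightarrow>
      gray_span \<alpha> \<beta> C = gray_span \<alpha> \<beta> (span_generators us vs)"
    using gray_span_eq_gen_span[OF C] by blast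
  moreover have "additive_code \<alpha> \<beta> (span_code \<alpha> \<beta> C)" "gray_span \<alpha> \<beta> C = Phi ` span_code \<alpha> \<beta> C"
    using additive_code_span_code[OF C] Phi_span_code[OF C] by simp_all
  ultimately show ?thesis unfolding span_generators_def by blast
qed

end
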